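(* Let $K\subset\mathbb R$ be compact, let $h:\mathbb R\to\mathbb R$ be a continuous increasing function with $h(0)=0$, and let $\varepsilon>0$. Then there exists a flow map $\varphi$ of the one-dimensional control system $\dot x=\theta_1x^3+\theta_2x^2$ with control $\theta=(\theta_1,\theta_2)\in\mathbb R^2$ (i.e. $\varphi\in\mathcal A_{\mathcal F}(K)$) such that $\|\varphi-h\|_{C(K)}<\varepsilon$.
   Context: Controls are piecewise constant; $\mathcal F=\{x\mapsto\theta_1x^3+\theta_2x^2:\theta\in\mathbb R^2\}$. For $g\in\mathcal F$, $\varphi^g_t$ is the time-$t$ flow of $\dot x=g(x)$. $\mathcal A_{\mathcal F}(K)$ is the set of compositions $\varphi^{f_k}_{t_k}\circ\cdots\circ\varphi^{f_1}_{t_1}$ on $K$ where, with $K_0=K$, each $t_j\ge0$ is smaller than the maximal time for which the flow of $f_j\in\mathcal F$ exists for all initial points in $K_{j-1}$, and $K_j=\varphi^{f_j}_{t_j}(K_{j-1})$. $\|\cdot\|_{C(K)}$ is the supremum norm on $K$. *)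

theory Defs
  imports "HOL-Analysis.Analysis"
begin

definition cubic_field :: "real \<times> real \<Rightarrow> real \<Rightarrow> real" where
  "cubic_field \<theta> x = fst \<theta> * x ^ 3 + snd \<theta> * x ^ 2"

definition FF :: "(real \<Rightarrow> real) set" where
  "FF = {g. \<exists>\<theta>. g = cubic_field \<theta>}"

definition is_solution :: "(real \<Rightarrow> real) \<Rightarrow> real \<Rightarrow> real \<Rightarrow> (real \<Rightarrow> real) \<Rightarrow> bool" where
  "is_solution g T x0 y \<longleftrightarrow> y 0 = x0 \<and>
     (\<forall>s\<in>{0..T}. (y has_real_derivative g (y s)) (at s within {0..T}))"

definition flow_exists :: "(real \<Rightarrow> real) \<Rightarrow> real \<Rightarrow> real \<Rightarrow> bool" where
  "flow_exists g T x0 \<longleftrightarrow> (\<exists>y. is_solution g T x0 y)"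

text \<open>Time-t flow map (solutions are unique for locally Lipschitz g).\<close>
definition flow :: "(real \<Rightarrow> real) \<Rightarrow> real \<Rightarrow> real \<Rightarrow> real" where
  "flow g t x0 = (THE z. \<exists>y. is_solution g t x0 y \<and> y t = z)"

text \<open>The time t must be smaller than the maximal time of existence for all initial points
  of the current set, i.e. there is T > t such that the flow exists on [0,T] for all of them.\<close>
inductive AF :: "real set \<Rightarrow> (real \<Rightarrow> real) \<Rightarrow> real set \<Rightarrow> bool" for K where
  AF_id: "AF K id K"
| AF_step: "AF K \<phi> K' \<Longrightarrow> g \<in> FF \<Longrightarrow> 0 \<le> t \<Longrightarrow>
     (\<exists>T>t. \<forall>x\<in>K'. flow_exists g T x) \<Longrightarrow>
     AF K (flow g t \<circ> \<phi>) (flow g t ` K')"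

definition A_F :: "real set \<Rightarrow> (real \<Rightarrow> real) set" where
  "A_F K = {\<phi>. \<exists>K'. AF K \<phi> K'}"

end

theory Submission
  imports Defs
begin

text \<open>
  The time-one flows of \<open>x' = a x\<^sup>2\<close> and \<open>x' = (b/2) x\<^sup>3\<close> are \<open>x \<mapsto> x/(1 - a x)\<close> and
  \<open>x \<mapsto> x/\<surd>(1 - b x\<^sup>2)\<close>, so every admissible composition (a word) of these steps is realised in
  \<open>A_F K\<close>. Conjugating a quadratic step by strong cubic steps adds a constant to \<open>1/x\<^sup>2\<close> on \<open>x > 0\<close>
  while almost fixing \<open>x < 0\<close>, and a zooming conjugation doubles the exponent; hence words approximate
  the maps with \<open>1/P(x)\<^sup>N = 1/x\<^sup>N + c\<close> on \<open>x > 0\<close>, \<open>N = 2\<^sup>k\<close>, which fix the negative half-line.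
  Composites of these maps push a single point up or down while barely moving the smaller positive
  points, so an increasing \<open>h\<close> with \<open>h 0 = 0\<close> can be fitted on a finite grid, one half-line at a
  time. Words are increasing, so fitting on a grid finer than the modulus of continuity of \<open>h\<close>
  gives a uniform approximation.
\<close>

section \<open>Flows of the control system\<close>

lemma cubic_field_lipschitz:
  fixes a b M :: real
  assumes "\<bar>a\<bar> \<le> M" "\<bar>b\<bar> \<le> M"
  shows "\<bar>cubic_field \<theta> a - cubic_field \<theta> b\<bar> \<le> (3*\<bar>fst \<theta>\<bar>*M^2 + 2*\<bar>snd \<theta>\<bar>*M) * \<bar>a - b\<bar>"
proof -
  have factor: "cubic_field \<theta> a - cubic_field \<theta> b = (a - b) * (fst \<theta> * (a^2+a*b+b^2) + snd \<theta> * (a+b))"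
    unfolding cubic_field_def by (simp add: algebra_simps power2_eq_square power3_eq_cube)
  have "\<bar>a^2+a*b+b^2\<bar> \<le> \<bar>a^2\<bar>+\<bar>a*b\<bar>+\<bar>b^2\<bar>"
    by (rule order_trans[OF abs_triangle_ineq add_right_mono[OF abs_triangle_ineq]])
  also have "\<dots> = \<bar>a\<bar>*\<bar>a\<bar>+\<bar>a\<bar>*\<bar>b\<bar>+\<bar>b\<bar>*\<bar>b\<bar>"
    by (simp add: abs_mult power2_eq_square)
  also have "\<dots> \<le> 3*M^2"
    using mult_mono[OF assms(1) assms(1)] mult_mono[OF assms(1) assms(2)] mult_mono[OF assms(2) assms(2)] assms
    by (simp add: power2_eq_square)
  finally have quad: "\<bar>a^2+a*b+b^2\<bar> \<le> 3*M^2" .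
  have lin: "\<bar>a+b\<bar> \<le> 2*M" using assms by linarith
  have "\<bar>fst \<theta> * (a^2+a*b+b^2) + snd \<theta> * (a+b)\<bar> \<le> \<bar>fst \<theta>\<bar> * \<bar>a^2+a*b+b^2\<bar> + \<bar>snd \<theta>\<bar>*\<bar>a+b\<bar>"
    by (metis abs_mult abs_triangle_ineq)
  also have "\<dots> \<le> 3*\<bar>fst \<theta>\<bar>*M^2 + 2*\<bar>snd \<theta>\<bar>*M"
    using mult_left_mono[OF quad, of "\<bar>fst \<theta>\<bar>"] mult_left_mono[OF lin, of "\<bar>snd \<theta>\<bar>"] by simp
  finally show ?thesis unfolding factor abs_mult
    by (subst mult.commute) (intro mult_right_mono abs_ge_zero)
qed

lemma is_solution_continuous:
  "is_solution g T x0 y \<Longrightarrow> continuous_on {0..T} y"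
  unfolding is_solution_def
  by (meson DERIV_continuous continuous_on_eq_continuous_within)

lemma is_solution_bounded:
  assumes "is_solution g T x0 y"
  obtains M where "\<And>t. t \<in> {0..T} \<Longrightarrow> \<bar>y t\<bar> \<le> M"
  using compact_imp_bounded[OF compact_continuous_image[OF is_solution_continuous[OF assms] compact_Icc]]
  unfolding bounded_iff by (metis image_eqI real_norm_def)

text \<open>Gronwall's argument: \<open>(y - z)\<^sup>2 exp (-2 L t)\<close> is nonincreasing and vanishes at \<open>0\<close>.\<close>
lemma is_solution_unique_if_lipschitz:
  assumes y: "is_solution g T x0 y" and z: "is_solution g T x0 z"
    and lip: "\<And>t. t \<in> {0..T} \<Longrightarrow> \<bar>g (y t) - g (z t)\<bar> \<le> L * \<bar>y t - z t\<bar>"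
    and s: "s \<in> {0..T}"
  shows "y s = z s"
proof -
  define u where "u t = (y t - z t)^2 * exp (-(2*L) * t)" for t
  have "continuous_on {0..s} y" "continuous_on {0..s} z"
    using s is_solution_continuous[OF y] is_solution_continuous[OF z]
    by (auto elim!: continuous_on_subset)
  then have cont: "continuous_on {0..s} u" unfolding u_def by (intro continuous_intros)
  have deriv: "\<exists>D. (u has_real_derivative D) (at t) \<and> D \<le> 0" if t: "0 < t" "t < s" for t
  proof -
    have tT: "t \<in> {0<..<T}" using t s by auto
    have "(y has_real_derivative g (y t)) (at t)" "(z has_real_derivative g (z t)) (at t)"
      using y z tT unfolding is_solution_def
      by (metis at_within_Icc_at atLeastAtMost_iff greaterThanLessThan_iff less_eq_real_def)+
    then have "(u has_real_derivative
        2 * exp (-(2*L) * t) * ((g (y t) - g (z t)) * (y t - z t) - L * (y t - z t)^2)) (at t)"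
      unfolding u_def by (auto intro!: derivative_eq_intros simp: algebra_simps)
    moreover have "(g (y t) - g (z t)) * (y t - z t) \<le> L * (y t - z t)^2"
      using mult_right_mono[OF lip[of t] abs_ge_zero[of "y t - z t"]] tT
      by (simp add: abs_mult[symmetric] power2_eq_square mult.assoc)
    ultimately show ?thesis
      by (intro exI conjI) (auto intro: mult_nonneg_nonpos)
  qed
  have "u s \<le> u 0"
    using DERIV_nonpos_imp_decreasing_open[of 0 s u] deriv cont s by auto
  moreover have "u 0 = 0" using y z unfolding u_def is_solution_def by simp
  ultimately have "(y s - z s)^2 * exp (-(2*L) * s) \<le> 0" unfolding u_def by simp
  then show ?thesis by (simp add: mult_le_0_iff)
qed

lemma cubic_solution_unique:
  assumes y: "is_solution (cubic_field \<theta>) T x0 y" and z: "is_solution (cubic_field \<theta>) T x0 z"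
    and s: "s \<in> {0..T}"
  shows "y s = z s"
proof -
  obtain My Mz where My: "\<And>t. t \<in> {0..T} \<Longrightarrow> \<bar>y t\<bar> \<le> My" and Mz: "\<And>t. t \<in> {0..T} \<Longrightarrow> \<bar>z t\<bar> \<le> Mz"
    using is_solution_bounded[OF y] is_solution_bounded[OF z] by metis
  define M where "M = max My Mz"
  show ?thesis
  proof (rule is_solution_unique_if_lipschitz[OF y z _ s])
    fix t assume "t \<in> {0..T}"
    then show "\<bar>cubic_field \<theta> (y t) - cubic_field \<theta> (z t)\<bar> \<le> (3*\<bar>fst \<theta>\<bar>*M^2 + 2*\<bar>snd \<theta>\<bar>*M) * \<bar>y t - z t\<bar>"
      using My Mz by (intro cubic_field_lipschitz) (force simp: M_def)+
  qed
qed

lemma flow_cubic_eqI: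
  assumes "is_solution (cubic_field \<theta>) t x y" "0 \<le> t"
  shows "flow (cubic_field \<theta>) t x = y t"
  unfolding flow_def
proof (rule the_equality)
  show "\<exists>y'. is_solution (cubic_field \<theta>) t x y' \<and> y' t = y t" using assms by blast
  show "z = y t" if "\<exists>y'. is_solution (cubic_field \<theta>) t x y' \<and> y' t = z" for z
    using that cubic_solution_unique[OF _ assms(1), of _ t] assms(2) by auto
qed

text \<open>The time-one flows of \<open>x' = a x\<^sup>2\<close> and \<open>x' = (b/2) x\<^sup>3\<close>; their time-\<open>s\<close> flows are
  \<open>quad_step (s a)\<close> and \<open>cube_step (s b)\<close>.\<close>
definition quad_step :: "real \<Rightarrow> real \<Rightarrow> real" where
  "quad_step a x = x / (1 - a*x)"

definition cube_step :: "real \<Rightarrow> real \<Rightarrow> real" where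
  "cube_step b x = x / sqrt (1 - b*x^2)"

lemma one_minus_mult_pos:
  fixes T k s :: real
  assumes "T * k < 1" "s \<in> {0..T}"
  shows "0 < 1 - s * k"
proof (cases "k \<le> 0")
  case True
  then show ?thesis using assms mult_nonneg_nonpos[of s k] by auto
next
  case False
  then have "s * k \<le> T * k" using assms by (intro mult_right_mono) auto
  then show ?thesis using assms by linarith
qed

lemma is_solutionI_at:
  assumes "\<And>s. s \<in> {0..T} \<Longrightarrow> (y has_real_derivative g (y s)) (at s)" "y 0 = x"
  shows "is_solution g T x y"
  using assms unfolding is_solution_def by (auto intro: has_field_derivative_at_within)

lemma quad_step_solution:
  assumes "T * (a*x) < 1"
  shows "is_solution (cubic_field (0,a)) T x (\<lambda>s. quad_step (s*a) x)"
proof (rule is_solutionI_at)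
  fix s assume "s \<in> {0..T}"
  then have pos: "0 < 1 - s*(a*x)" using one_minus_mult_pos[OF assms] by blast
  have "((\<lambda>s. x / (1 - s*(a*x))) has_real_derivative x * (a*x) / (1 - s*(a*x))^2) (at s)"
    using pos by (auto intro!: derivative_eq_intros simp: power2_eq_square)
  moreover have "x * (a*x) / (1 - s*(a*x))^2 = cubic_field (0,a) (quad_step (s*a) x)"
    unfolding cubic_field_def quad_step_def using pos by (simp add: field_simps power2_eq_square)
  ultimately show "((\<lambda>s. quad_step (s*a) x) has_real_derivative cubic_field (0,a) (quad_step (s*a) x)) (at s)"
    by (simp add: quad_step_def mult.assoc)
qed (simp add: quad_step_def)

lemma cube_step_solution:
  assumes "T * (b*x^2) < 1"
  shows "is_solution (cubic_field (b/2,0)) T x (\<lambda>s. cube_step (s*b) x)"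
proof (rule is_solutionI_at)
  fix s assume "s \<in> {0..T}"
  then have pos: "0 < 1 - s*(b*x^2)" using one_minus_mult_pos[OF assms] by blast
  define r where "r = sqrt (1 - s*(b*x^2))"
  have r: "r > 0" "r * r = 1 - s*(b*x^2)" using pos unfolding r_def by auto
  have "((\<lambda>s. sqrt (1 - s*(b*x^2))) has_real_derivative inverse r / 2 * (0 - 1 * (b*x^2))) (at s)"
    unfolding r_def using pos by (intro DERIV_chain2[OF DERIV_real_sqrt] derivative_eq_intros) auto
  from DERIV_divide[OF DERIV_const this, of x]
  have "((\<lambda>s. x / sqrt (1 - s*(b*x^2))) has_real_derivative
      (0 * r - x * (inverse r / 2 * (0 - 1 * (b*x^2)))) / (r * r)) (at s)"
    using r unfolding r_def by simp
  moreover have "(0 * r - x * (inverse r / 2 * (0 - 1 * (b*x^2)))) / (r * r)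
      = cubic_field (b/2,0) (cube_step (s*b) x)"
  proof -
    have eq: "cube_step (s*b) x = x / r" by (simp add: cube_step_def r_def mult.assoc)
    show ?thesis unfolding eq cubic_field_def using r(1)
      by (simp add: field_simps power3_eq_cube power2_eq_square)
  qed
  ultimately show "((\<lambda>s. cube_step (s*b) x) has_real_derivative cubic_field (b/2,0) (cube_step (s*b) x)) (at s)"
    by (simp add: cube_step_def mult.assoc r_def)
qed (simp add: cube_step_def)

section \<open>Words of elementary steps\<close>

datatype step = Quad real | Cube real

fun step_map :: "step \<Rightarrow> real \<Rightarrow> real" where
  "step_map (Quad a) = quad_step a"
| "step_map (Cube b) = cube_step b"

fun step_rate :: "step \<Rightarrow> real \<Rightarrow> real" where
  "step_rate (Quad a) x = a*x"
| "step_rate (Cube b) x = b*x^2"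

definition step_ok :: "step \<Rightarrow> real \<Rightarrow> bool" where
  "step_ok s x \<longleftrightarrow> step_rate s x < 1"

fun step_field :: "step \<Rightarrow> real \<Rightarrow> real" where
  "step_field (Quad a) = cubic_field (0, a)"
| "step_field (Cube b) = cubic_field (b/2, 0)"

fun run :: "step list \<Rightarrow> real \<Rightarrow> real" where
  "run [] x = x"
| "run (s # w) x = run w (step_map s x)"

fun admissible :: "step list \<Rightarrow> real \<Rightarrow> bool" where
  "admissible [] x = True"
| "admissible (s # w) x = (step_ok s x \<and> admissible w (step_map s x))"

definition admissible_on :: "step list \<Rightarrow> real set \<Rightarrow> bool" where
  "admissible_on w X \<longleftrightarrow> (\<forall>x\<in>X. admissible w x)"

lemma run_append [simp]: "run (w1 @ w2) x = run w2 (run w1 x)"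
  by (induction w1 arbitrary: x) auto

lemma admissible_append [simp]:
  "admissible (w1 @ w2) x \<longleftrightarrow> admissible w1 x \<and> admissible w2 (run w1 x)"
  by (induction w1 arbitrary: x) auto

lemma step_field_in_FF: "step_field s \<in> FF"
  unfolding FF_def by (cases s) auto

lemma isCont_step_map:
  assumes "step_ok s x" shows "isCont (step_map s) x"
proof (cases s)
  case (Quad a)
  then have "1 - a*x \<noteq> 0" using assms by (simp add: step_ok_def)
  then show ?thesis using Quad by (auto simp: quad_step_def[abs_def] intro!: continuous_intros)
next
  case (Cube b)
  then have "sqrt (1 - b*x^2) \<noteq> 0" using assms by (simp add: step_ok_def)
  then show ?thesis using Cube by (auto simp: cube_step_def[abs_def] intro!: continuous_intros)
qed

lemma run_Nil_eq_id: "run [] = id"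
  by (simp add: fun_eq_iff)

lemma isCont_run: "admissible w x \<Longrightarrow> isCont (run w) x"
proof (induction w arbitrary: x)
  case (Cons s w)
  then have "isCont (run w \<circ> step_map s) x"
    using isCont_step_map by (intro continuous_at_compose) auto
  then show ?case by (simp add: o_def)
qed (simp add: run_Nil_eq_id)

lemma continuous_on_run: "admissible_on w X \<Longrightarrow> continuous_on X (run w)"
  unfolding admissible_on_def using isCont_run continuous_at_imp_continuous_on by blast

lemma compact_uniform_margin:
  fixes k :: "real \<Rightarrow> real"
  assumes "compact X" "continuous_on X k" "\<forall>x\<in>X. k x < 1"
  shows "\<exists>T>1. \<forall>x\<in>X. T * k x < 1"
proof (cases "X = {}")
  case False
  obtain x0 where x0: "x0 \<in> X" "\<forall>x\<in>X. k x \<le> k x0"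
    using compact_attains_sup[OF compact_continuous_image[OF assms(2,1)]] False by auto
  define T where "T = (if k x0 \<le> 0 then 2 else (1 + 1/k x0)/2)"
  have "T > 1" "T * k x0 < 1" using assms(3) x0 by (auto simp: T_def field_simps)
  moreover have "T * k x \<le> max 0 (T * k x0)" if "x \<in> X" for x
    using x0 that \<open>T > 1\<close> mult_nonneg_nonpos[of T "k x"]
    by (cases "k x \<le> 0") (auto intro: mult_left_mono)
  ultimately show ?thesis by (intro exI[of _ T]) force
qed (auto intro: exI[of _ 2])

lemma step_flow:
  assumes "T * step_rate s x < 1" "T \<ge> 1"
  shows "flow_exists (step_field s) T x" "flow (step_field s) 1 x = step_map s x"
proof -
  have "1 * step_rate s x < 1" using one_minus_mult_pos[OF assms(1), of 1] assms(2) by simp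
  then show "flow (step_field s) 1 x = step_map s x"
    using flow_cubic_eqI[OF quad_step_solution] flow_cubic_eqI[OF cube_step_solution]
    by (cases s) fastforce+
  show "flow_exists (step_field s) T x"
    using assms unfolding flow_exists_def by (cases s) (auto dest: quad_step_solution cube_step_solution)
qed

text \<open>Each step is run for time one; the admissibility margin on the compact current set leaves
  room for a larger time \<open>T\<close>, as the definition of \<open>AF\<close> demands.\<close>
lemma admissible_word_realized:
  assumes "compact X" "admissible_on w X"
  shows "\<exists>\<phi>. AF X \<phi> (run w ` X) \<and> (\<forall>x\<in>X. \<phi> x = run w x)"
  using assms(2)
proof (induction w rule: rev_induct)
  case Nil
  show ?case using AF_id[of X] by (auto simp: run_Nil_eq_id)
next
  case (snoc s w)
  have "admissible_on w X" using snoc.prems unfolding admissible_on_def by auto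
  then obtain \<phi> where \<phi>: "AF X \<phi> (run w ` X)" "\<forall>x\<in>X. \<phi> x = run w x"
    and "compact (run w ` X)"
    using snoc.IH compact_continuous_image[OF continuous_on_run assms(1)] by blast
  moreover have "\<forall>x\<in>run w ` X. step_rate s x < 1"
    using snoc.prems by (auto simp: admissible_on_def step_ok_def)
  moreover have "continuous_on (run w ` X) (step_rate s)"
    by (cases s) (auto intro!: continuous_intros)
  ultimately obtain T where T: "T > 1" "\<forall>x\<in>run w ` X. T * step_rate s x < 1"
    using compact_uniform_margin by blast
  have "AF X (flow (step_field s) 1 \<circ> \<phi>) (flow (step_field s) 1 ` run w ` X)"
    using T step_flow(1) by (intro AF_step[OF \<phi>(1) step_field_in_FF]) auto
  moreover have "flow (step_field s) 1 ` run w ` X = run (w @ [s]) ` X"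
    using T step_flow(2) by (force simp: image_iff)
  moreover have "\<forall>x\<in>X. (flow (step_field s) 1 \<circ> \<phi>) x = run (w @ [s]) x"
    using \<phi>(2) T step_flow(2) by auto
  ultimately show ?case by metis
qed

section \<open>Sign, monotonicity and symmetries of words\<close>

lemma quad_step_inverse: "x \<noteq> 0 \<Longrightarrow> 1 - a*x > 0 \<Longrightarrow> 1 / quad_step a x = 1/x - a"
  unfolding quad_step_def by (simp add: field_simps)

lemma quad_step_sign:
  "1 - a*x > 0 \<Longrightarrow> (quad_step a x > 0 \<longleftrightarrow> x > 0) \<and> (quad_step a x < 0 \<longleftrightarrow> x < 0)"
  unfolding quad_step_def by (simp add: zero_less_divide_iff divide_less_0_iff)

lemma cube_step_inverse: "x \<noteq> 0 \<Longrightarrow> 1 - b*x^2 > 0 \<Longrightarrow> 1 / (cube_step b x)^2 = 1/x^2 - b"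
  unfolding cube_step_def by (simp add: field_simps power_divide)

lemma cube_step_sign:
  "1 - b*x^2 > 0 \<Longrightarrow> (cube_step b x > 0 \<longleftrightarrow> x > 0) \<and> (cube_step b x < 0 \<longleftrightarrow> x < 0)"
  unfolding cube_step_def by (simp add: zero_less_divide_iff divide_less_0_iff)

lemma step_map_sign:
  "step_ok s x \<Longrightarrow> (step_map s x > 0 \<longleftrightarrow> x > 0) \<and> (step_map s x < 0 \<longleftrightarrow> x < 0)"
  by (cases s) (auto simp: step_ok_def quad_step_sign cube_step_sign)

lemma run_sign:
  "admissible w x \<Longrightarrow> (run w x > 0 \<longleftrightarrow> x > 0) \<and> (run w x < 0 \<longleftrightarrow> x < 0)"
  by (induction w arbitrary: x) (auto dest: step_map_sign)

lemma sgn_eqI: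
  fixes a b :: real
  shows "(a > 0 \<longleftrightarrow> b > 0) \<and> (a < 0 \<longleftrightarrow> b < 0) \<Longrightarrow> sgn a = sgn b"
  by (cases a b rule: linorder_cases[case_product linorder_cases]) auto

lemma step_map_zero [simp]: "step_map s 0 = 0"
  by (cases s) (auto simp: quad_step_def cube_step_def)

lemma run_zero [simp]: "run w 0 = 0"
  by (induction w) auto

lemma step_ok_zero [simp]: "step_ok s 0"
  by (cases s) (auto simp: step_ok_def)

lemma admissible_zero [simp]: "admissible w 0"
  by (induction w) auto

lemma quad_step_strict_mono:
  assumes "1 - a*x > 0" "1 - a*y > 0" "x < y"
  shows "quad_step a x < quad_step a y"
proof -
  have "quad_step a y - quad_step a x = (y - x) / ((1-a*x)*(1-a*y))"
    unfolding quad_step_def using assms by (simp add: field_simps)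
  also have "\<dots> > 0" using assms by simp
  finally show ?thesis by simp
qed

lemma cube_step_strict_mono_nonneg:
  assumes "1 - b*y^2 > 0" "0 \<le> x" "x < y"
  shows "cube_step b x < cube_step b y"
proof -
  have x2: "x^2 < y^2" using assms by (simp add: power_strict_mono)
  have x: "1 - b*x^2 > 0"
  proof (cases "b \<le> 0")
    case True
    then show ?thesis using mult_nonpos_nonneg[of b "x^2"] by simp
  next
    case False
    then have "b*x^2 \<le> b*y^2" using x2 by simp
    then show ?thesis using assms by linarith
  qed
  have "x^2 * (1 - b*y^2) < y^2 * (1 - b*x^2)" using x2 by (simp add: algebra_simps)
  then have "(cube_step b x)^2 < (cube_step b y)^2"
    unfolding cube_step_def using x assms(1) by (simp add: power_divide field_simps)
  moreover have "cube_step b y \<ge> 0" unfolding cube_step_def using assms by auto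
  ultimately show ?thesis using power_less_imp_less_base by blast
qed

lemma cube_step_strict_mono:
  assumes "1 - b*x^2 > 0" "1 - b*y^2 > 0" "x < y"
  shows "cube_step b x < cube_step b y"
proof -
  have odd: "cube_step b (-z) = - cube_step b z" for z unfolding cube_step_def by simp
  consider "0 \<le> x" | "y \<le> 0" | "x < 0" "0 < y" by linarith
  then show ?thesis
  proof cases
    case 2
    then show ?thesis using cube_step_strict_mono_nonneg[of b "-x" "-y"] assms by (simp add: odd)
  next
    case 3
    then show ?thesis using cube_step_sign assms by (meson less_trans)
  qed (use cube_step_strict_mono_nonneg assms in blast)
qed

lemma run_strict_mono: "admissible w x \<Longrightarrow> admissible w y \<Longrightarrow> x < y \<Longrightarrow> run w x < run w y"
proof (induction w arbitrary: x y)
  case (Cons s w)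
  then have "step_map s x < step_map s y"
    by (cases s) (auto simp: step_ok_def quad_step_strict_mono cube_step_strict_mono)
  then show ?case using Cons by simp
qed simp

lemma run_mono: "admissible w x \<Longrightarrow> admissible w y \<Longrightarrow> x \<le> y \<Longrightarrow> run w x \<le> run w y"
  using run_strict_mono by (metis order_le_less)

fun step_reflect :: "step \<Rightarrow> step" where
  "step_reflect (Quad a) = Quad (-a)"
| "step_reflect (Cube b) = Cube b"

fun step_rescale :: "real \<Rightarrow> step \<Rightarrow> step" where
  "step_rescale c (Quad a) = Quad (a/c)"
| "step_rescale c (Cube b) = Cube (b/c^2)"

lemma run_reflect:
  "run (map step_reflect w) (-x) = - run w x"
  "admissible (map step_reflect w) (-x) \<longleftrightarrow> admissible w x"
proof -
  have step: "step_map (step_reflect s) (-x) = - step_map s x"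
    "step_ok (step_reflect s) (-x) \<longleftrightarrow> step_ok s x" for s x
    by (cases s; simp add: quad_step_def cube_step_def step_ok_def)+
  show "run (map step_reflect w) (-x) = - run w x"
    by (induction w arbitrary: x) (simp_all add: step(1))
  show "admissible (map step_reflect w) (-x) \<longleftrightarrow> admissible w x"
    by (induction w arbitrary: x) (simp_all add: step)
qed

lemma run_rescale:
  assumes "c > 0"
  shows "run (map (step_rescale c) w) (c*x) = c * run w x"
    "admissible (map (step_rescale c) w) (c*x) \<longleftrightarrow> admissible w x"
proof -
  have step: "step_map (step_rescale c s) (c*x) = c * step_map s x"
    "step_ok (step_rescale c s) (c*x) \<longleftrightarrow> step_ok s x" for s x
    using assms
    by (cases s; simp add: quad_step_def cube_step_def step_ok_def field_simps power2_eq_square;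
        simp add: real_sqrt_mult)+
  show "run (map (step_rescale c) w) (c*x) = c * run w x"
    by (induction w arbitrary: x) (simp_all add: step(1))
  show "admissible (map (step_rescale c) w) (c*x) \<longleftrightarrow> admissible w x"
    by (induction w arbitrary: x) (simp_all add: step)
qed

section \<open>Maps approximable by admissible words\<close>

definition approximable_on :: "(real \<Rightarrow> real) \<Rightarrow> real \<Rightarrow> real \<Rightarrow> bool" where
  "approximable_on f p q \<longleftrightarrow>
     (\<forall>\<eta>>0. \<exists>w. admissible_on w {p..q} \<and> (\<forall>x\<in>{p..q}. \<bar>run w x - f x\<bar> \<le> \<eta>))"

definition approximable :: "(real \<Rightarrow> real) \<Rightarrow> bool" where
  "approximable f \<longleftrightarrow> (\<forall>R>0. approximable_on f (-R) R \<and> continuous_on {-R..R} f)"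

lemma approximable_on_comp:
  assumes f: "approximable_on f p q"
    and g: "approximable_on g p' q'" "continuous_on {p'..q'} g"
    and r: "r > 0" and inside: "\<forall>x\<in>{p..q}. p' + r \<le> f x \<and> f x \<le> q' - r"
  shows "approximable_on (g \<circ> f) p q"
  unfolding approximable_on_def
proof (intro allI impI)
  fix \<eta> :: real assume \<eta>: "\<eta> > 0"
  obtain \<delta> where \<delta>: "\<delta> > 0"
    "\<And>x x'. x \<in> {p'..q'} \<Longrightarrow> x' \<in> {p'..q'} \<Longrightarrow> dist x' x < \<delta> \<Longrightarrow> dist (g x') (g x) < \<eta>/2"
    using uniformly_continuous_onE[OF compact_uniformly_continuous[OF g(2) compact_Icc], of "\<eta>/2"] \<eta>
    by (metis half_gt_zero)
  obtain w1 where w1: "admissible_on w1 {p..q}" "\<forall>x\<in>{p..q}. \<bar>run w1 x - f x\<bar> \<le> min (\<delta>/2) r"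
    using f \<delta>(1) r unfolding approximable_on_def by (metis half_gt_zero min_less_iff_conj)
  obtain w2 where w2: "admissible_on w2 {p'..q'}" "\<forall>x\<in>{p'..q'}. \<bar>run w2 x - g x\<bar> \<le> \<eta>/2"
    using g(1) \<eta> unfolding approximable_on_def by (meson half_gt_zero)
  have inner: "run w1 x \<in> {p'..q'}" "f x \<in> {p'..q'}" "dist (run w1 x) (f x) < \<delta>"
    if "x \<in> {p..q}" for x
    using w1(2) inside that r \<delta>(1) by (fastforce simp: dist_real_def abs_le_iff)+
  show "\<exists>w. admissible_on w {p..q} \<and> (\<forall>x\<in>{p..q}. \<bar>run w x - (g \<circ> f) x\<bar> \<le> \<eta>)"
  proof (intro exI conjI ballI)
    show "admissible_on (w1 @ w2) {p..q}"
      using w1(1) w2(1) inner(1) unfolding admissible_on_def by auto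
    fix x assume x: "x \<in> {p..q}"
    have "\<bar>run w2 (run w1 x) - g (run w1 x)\<bar> \<le> \<eta>/2" using w2(2) inner(1)[OF x] by blast
    moreover have "\<bar>g (run w1 x) - g (f x)\<bar> < \<eta>/2"
      using \<delta>(2)[OF inner(2,1,3)[OF x]] by (simp add: dist_real_def)
    ultimately show "\<bar>run (w1 @ w2) x - (g \<circ> f) x\<bar> \<le> \<eta>"
      unfolding run_append comp_apply by linarith
  qed
qed

lemma approximable_on_reflect:
  assumes "approximable_on f p q"
  shows "approximable_on (\<lambda>x. - f (-x)) (-q) (-p)"
  unfolding approximable_on_def
proof (intro allI impI)
  fix \<eta> :: real assume "\<eta> > 0"
  then obtain w where w: "admissible_on w {p..q}" "\<forall>x\<in>{p..q}. \<bar>run w x - f x\<bar> \<le> \<eta>"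
    using assms unfolding approximable_on_def by blast
  have "run (map step_reflect w) x = - run w (-x)" "admissible (map step_reflect w) x = admissible w (-x)" for x
    using run_reflect[of w "-x"] by auto
  moreover have "-x \<in> {p..q}" if "x \<in> {-q..-p}" for x using that by auto
  ultimately show "\<exists>w. admissible_on w {-q..-p} \<and> (\<forall>x\<in>{-q..-p}. \<bar>run w x - - f (- x)\<bar> \<le> \<eta>)"
    using w unfolding admissible_on_def
    by (intro exI[of _ "map step_reflect w"]) (auto simp: abs_minus_commute)
qed

lemma approximable_id: "approximable id"
  unfolding approximable_def approximable_on_def admissible_on_def
  by (auto intro!: exI[of _ "[]"] continuous_intros)

lemma approximable_comp:
  assumes f: "approximable f" and g: "approximable g"
  shows "approximable (g \<circ> f)"
  unfolding approximable_def
proof (intro allI impI conjI)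
  fix R :: real assume R: "R > 0"
  then have f_R: "approximable_on f (-R) R" "continuous_on {-R..R} f"
    using f unfolding approximable_def by auto
  obtain B where B: "\<forall>x\<in>{-R..R}. \<bar>f x\<bar> \<le> B"
    using compact_imp_bounded[OF compact_continuous_image[OF f_R(2) compact_Icc]]
    unfolding bounded_iff by (metis image_eqI real_norm_def)
  define R' where "R' = \<bar>B\<bar> + 1"
  have "R' > 0" unfolding R'_def by simp
  then have g_R': "approximable_on g (-R') R'" "continuous_on {-R'..R'} g"
    using g unfolding approximable_def by auto
  show "approximable_on (g \<circ> f) (-R) R"
    by (rule approximable_on_comp[OF f_R(1) g_R', of 1]) (use B in \<open>auto simp: R'_def abs_le_iff\<close>)
  have "f ` {-R..R} \<subseteq> {-R'..R'}" using B unfolding R'_def by (force simp: abs_le_iff)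
  then show "continuous_on {-R..R} (g \<circ> f)"
    using continuous_on_compose continuous_on_subset f_R(2) g_R'(2) by blast
qed

lemma approximable_reflect:
  assumes "approximable f"
  shows "approximable (\<lambda>x. - f (-x))"
  unfolding approximable_def
proof (intro allI impI conjI)
  fix R :: real assume R: "R > 0"
  then show "approximable_on (\<lambda>x. - f (- x)) (- R) R"
    using approximable_on_reflect[of f "-R" R] assms unfolding approximable_def by auto
  have "continuous_on {-R..R} f" using assms R unfolding approximable_def by auto
  moreover have "uminus ` {-R..R} \<subseteq> {-R..(R::real)}" by auto
  ultimately have "continuous_on {-R..R} (f \<circ> uminus)"
    by (intro continuous_on_compose) (auto intro: continuous_on_subset continuous_intros)
  then show "continuous_on {-R..R} (\<lambda>x. - f (- x))"
    by (auto intro!: continuous_intros simp: o_def)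
qed

section \<open>Power flows\<close>

text \<open>For \<open>x > 0\<close> this is the time-one flow of \<open>x' = -(c/N) x\<^sup>N\<^sup>+\<^sup>1\<close>, which adds \<open>c\<close> to \<open>1/x\<^sup>N\<close>.\<close>
definition pow_flow :: "nat \<Rightarrow> real \<Rightarrow> real \<Rightarrow> real" where
  "pow_flow N c x = (if x \<le> 0 then x else x * (1 + c*x^N) powr (-1/N))"

lemma pow_flow_nonpos [simp]: "x \<le> 0 \<Longrightarrow> pow_flow N c x = x"
  unfolding pow_flow_def by simp

lemma pow_flow_pos:
  assumes "x > 0" "1 + c*x^N > 0" "N > 0"
  shows "pow_flow N c x > 0" "(pow_flow N c x)^N = x^N / (1 + c*x^N)"
    "1 / (pow_flow N c x)^N = 1/x^N + c"
proof -
  show "pow_flow N c x > 0" using assms unfolding pow_flow_def by simp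
  have "(pow_flow N c x)^N = x^N * ((1 + c*x^N) powr (-1/N))^N"
    using assms unfolding pow_flow_def by (simp add: power_mult_distrib)
  also have "((1 + c*x^N) powr (-1/N))^N = (1 + c*x^N) powr (-1)"
    using assms by (simp add: powr_power)
  also have "\<dots> = 1 / (1 + c*x^N)" using assms by (simp add: powr_minus divide_inverse)
  finally show pow: "(pow_flow N c x)^N = x^N / (1 + c*x^N)" by simp
  show "1 / (pow_flow N c x)^N = 1/x^N + c" unfolding pow using assms by (simp add: field_simps)
qed

lemma one_plus_mult_pow_pos:
  fixes c q x :: real
  assumes "1 + c*q^N > 0" "0 \<le> x" "x \<le> q"
  shows "1 + c*x^N > 0"
proof (cases "c \<ge> 0")
  case True then show ?thesis using assms by (simp add: add_pos_nonneg)
next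
  case False
  have "x^N \<le> q^N" using assms by (simp add: power_mono)
  then have "c*q^N \<le> c*x^N" using False by (simp add: mult_left_mono_neg)
  then show ?thesis using assms by linarith
qed

lemma one_plus_mult_pow_pos_beyond:
  fixes c t0 :: real
  assumes "1 + c*t0^N > 0"
  obtains t where "t > t0" "1 + c*t^N > 0"
proof -
  have "isCont (\<lambda>t. 1 + c*t^N) t0" by simp
  then obtain d where d: "d > 0" "\<And>t. norm (t - t0) < d \<Longrightarrow> \<bar>(1 + c*t^N) - (1 + c*t0^N)\<bar> < 1 + c*t0^N"
    using assms unfolding continuous_at_real_range by blast
  have "\<bar>(1 + c*(t0 + d/2)^N) - (1 + c*t0^N)\<bar> < 1 + c*t0^N" using d by simp
  then have "1 + c*(t0 + d/2)^N > 0" by (simp add: abs_less_iff)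
  then show ?thesis using that[of "t0 + d/2"] d(1) by simp
qed

lemma continuous_on_pow_flow:
  assumes "\<forall>x\<in>{0..q}. 1 + c*x^N > 0"
  shows "continuous_on {p..q} (pow_flow N c)"
  unfolding pow_flow_def[abs_def]
proof (rule continuous_on_cases_1)
  have "\<forall>x\<in>{t \<in> {p..q}. 0 \<le> t}. 1 + c * x ^ N \<noteq> 0" using assms by force
  then show "continuous_on {t \<in> {p..q}. 0 \<le> t} (\<lambda>x. x * (1 + c * x ^ N) powr (- 1 / real N))"
    by (intro continuous_intros)
qed (auto intro: continuous_intros)

lemma pow_flow_strict_mono:
  assumes "0 < a" "a < b" "1 + c*b^N > 0" "N > 0"
  shows "0 < pow_flow N c a" "pow_flow N c a < pow_flow N c b"
proof -
  have "1 + c*a^N > 0" using one_plus_mult_pow_pos[OF assms(3), of a] assms by auto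
  note A = pow_flow_pos[OF assms(1) this assms(4)]
  note B = pow_flow_pos[OF _ assms(3) assms(4)]
  show "0 < pow_flow N c a" using A by simp
  have "1/b^N < 1/a^N" using assms by (simp add: frac_less2 power_strict_mono)
  then have "1/(pow_flow N c b)^N < 1/(pow_flow N c a)^N" using A(3) B(3) assms by simp
  then have "(pow_flow N c a)^N < (pow_flow N c b)^N" using A(1) B(1) assms
    by (simp add: field_simps)
  then show "pow_flow N c a < pow_flow N c b"
    using B(1) assms power_less_imp_less_base by (meson less_le less_trans)
qed

lemma pow_flow_mono:
  "0 < a \<Longrightarrow> a \<le> b \<Longrightarrow> 1 + c*b^N > 0 \<Longrightarrow> N > 0 \<Longrightarrow> pow_flow N c a \<le> pow_flow N c b"
  using pow_flow_strict_mono[of a b c N] by (cases "a = b") auto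

lemma pow_flow_double:
  assumes "x > 0" "1 + c*x^(2*N) > 0" "N > 0"
  shows "pow_flow (2*N) c x = sqrt (pow_flow N c (x^2))"
proof -
  have "pow_flow N c (x^2) = x^2 * (1 + c*x^(2*N)) powr (-1/N)"
    using assms unfolding pow_flow_def by (simp add: power_mult)
  then have "sqrt (pow_flow N c (x^2)) = x * sqrt ((1 + c*x^(2*N)) powr (-1/N))"
    using assms by (simp add: real_sqrt_mult)
  also have "sqrt ((1 + c*x^(2*N)) powr (-1/N)) = (1 + c*x^(2*N)) powr (-1/(2*N))"
    using assms by (simp add: sqrt_def root_powr_inverse powr_powr) (simp add: powr_powr field_simps)
  finally show ?thesis unfolding pow_flow_def using assms by simp
qed

lemma pow_eq_imp_eq_pos: "(a::real) > 0 \<Longrightarrow> b > 0 \<Longrightarrow> N > 0 \<Longrightarrow> 1/a^N = 1/b^N \<Longrightarrow> a = b"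
  by (metis less_eq_real_def nonzero_imp_inverse_nonzero power_eq_imp_eq_base inverse_eq_divide inverse_inverse_eq)

lemma abs_diff_le_sqrt_abs_diff_squares:
  fixes z P :: real
  assumes "z \<ge> 0" "P \<ge> 0"
  shows "\<bar>z - P\<bar> \<le> sqrt \<bar>z^2 - P^2\<bar>"
proof -
  have "\<bar>z - P\<bar>^2 = \<bar>z - P\<bar> * \<bar>z - P\<bar>" by (simp add: power2_eq_square)
  also have "\<dots> \<le> \<bar>z - P\<bar> * (z + P)" using assms by (intro mult_left_mono) (auto simp: abs_le_iff)
  also have "\<dots> = \<bar>(z - P) * (z + P)\<bar>" using assms by (simp add: abs_mult)
  also have "\<dots> = \<bar>z^2 - P^2\<bar>" by (simp add: algebra_simps power2_eq_square)
  finally show ?thesis by (simp add: real_le_rsqrt)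
qed

lemma abs_sqrt_diff_le_sqrt: "a \<ge> 0 \<Longrightarrow> b \<ge> 0 \<Longrightarrow> \<bar>sqrt a - sqrt b\<bar> \<le> sqrt \<bar>a - b\<bar>"
  using abs_diff_le_sqrt_abs_diff_squares[of "sqrt a" "sqrt b"] by simp

lemma abs_sqrt_diff_le_of_square_bound:
  fixes a b e :: real
  assumes "a \<ge> 0" "b \<ge> 0" "e \<ge> 0" "\<bar>a - b\<bar> \<le> e^2"
  shows "\<bar>sqrt a - sqrt b\<bar> \<le> e"
  using abs_sqrt_diff_le_sqrt[OF assms(1,2)] real_le_lsqrt[OF assms(3,4)] by linarith

lemma abs_sqrt_diff_le_div:
  fixes a b :: real
  assumes "a \<ge> 0" "b > 0"
  shows "\<bar>sqrt a - sqrt b\<bar> \<le> \<bar>a - b\<bar> / sqrt b"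
proof -
  have "\<bar>sqrt a - sqrt b\<bar> * (sqrt a + sqrt b) = \<bar>(sqrt a - sqrt b) * (sqrt a + sqrt b)\<bar>"
    using assms by (simp add: abs_mult)
  also have "\<dots> = \<bar>a - b\<bar>" using assms by (simp add: algebra_simps)
  finally have "\<bar>sqrt a - sqrt b\<bar> * (sqrt a + sqrt b) = \<bar>a - b\<bar>" .
  moreover have "\<bar>sqrt a - sqrt b\<bar> * sqrt b \<le> \<bar>sqrt a - sqrt b\<bar> * (sqrt a + sqrt b)"
    using assms by (intro mult_left_mono) auto
  ultimately show ?thesis using assms by (simp add: field_simps)
qed

lemma sqrt_one_plus_square_le:
  assumes "t \<ge> 0" shows "sqrt (1 + t^2) - 1 \<le> t"
proof -
  have "sqrt (1 + t^2) \<le> sqrt ((1+t)^2)"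
    using assms by (intro real_sqrt_le_mono) (simp add: power2_eq_square algebra_simps)
  then show ?thesis using assms by simp
qed

lemma reciprocal_close_imp_close:
  fixes x e R \<eta> :: real
  assumes "x < 0" "-R \<le> x" "e < 0" "\<bar>1/e - 1/x\<bar> \<le> \<eta>" "\<eta> \<le> 1/(2*R)"
  shows "\<bar>e - x\<bar> \<le> 2*R^2*\<eta>"
proof -
  have R: "R > 0" and ax: "\<bar>x\<bar> \<le> R" using assms by linarith+
  have "1/\<bar>x\<bar> \<ge> 1/R" using ax assms R by (intro frac_le) auto
  moreover have "\<bar>1/e\<bar> \<ge> 1/\<bar>x\<bar> - \<eta>"
    using assms(4) abs_triangle_ineq2[of "1/x" "1/e"] by (simp add: abs_minus_commute)
  ultimately have "\<bar>1/e\<bar> \<ge> 1/(2*R)" using assms(5) by (simp add: field_simps)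
  then have ae: "\<bar>e\<bar> \<le> 2*R" using R assms(3) by (simp add: field_simps abs_if split: if_splits)
  have "1/e - 1/x = (x - e)/(e*x)" using assms by (simp add: field_simps)
  then have "\<bar>e - x\<bar> = \<bar>e\<bar> * \<bar>x\<bar> * \<bar>1/e - 1/x\<bar>"
    using assms by (simp add: abs_mult abs_minus_commute)
  also have "\<dots> \<le> (2*R) * R * \<eta>"
    by (intro mult_mono ae ax assms(4)) (use R in auto)
  finally show ?thesis by (simp add: power2_eq_square)
qed

section \<open>Approximating power flows by words\<close>

text \<open>On the negative side the word is only required to be close to the identity in the coordinate
  \<open>1/x\<close>: this is the form in which the zoom below carries the estimate from one exponent to the next.\<close>
definition pow_flow_word :: "nat \<Rightarrow> real \<Rightarrow> real \<Rightarrow> real \<Rightarrow> real \<Rightarrow> step list \<Rightarrow> bool" where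
  "pow_flow_word N c R1 R2 \<eta> w \<longleftrightarrow> admissible_on w {-R1..R2}
     \<and> (\<forall>x\<in>{0..R2}. \<bar>run w x - pow_flow N c x\<bar> \<le> \<eta>)
     \<and> (\<forall>x\<in>{-R1..<0}. \<bar>1/run w x - 1/x\<bar> \<le> \<eta>)"

lemma pow_flow_wordI:
  assumes "\<And>x. x \<in> {0..R2} \<Longrightarrow> admissible w x \<and> \<bar>run w x - pow_flow N c x\<bar> \<le> \<eta>"
    and "\<And>x. x \<in> {-R1..<0} \<Longrightarrow> admissible w x \<and> \<bar>1/run w x - 1/x\<bar> \<le> \<eta>"
  shows "pow_flow_word N c R1 R2 \<eta> w"
  unfolding pow_flow_word_def admissible_on_def
  using assms by (metis atLeastAtMost_iff atLeastLessThan_iff linorder_not_le)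

lemma squeeze_inverse:
  assumes "s > 0" "x \<noteq> 0"
  shows "1 / cube_step (-(s^2)) x = sgn x * (s * sqrt (1 + 1/(x * s)^2))"
proof -
  have ok: "1 - (-(s^2))*x^2 > 0" by (simp add: add_pos_nonneg)
  have "s * sqrt (1 + 1/(x * s)^2) = sqrt (s^2 * (1 + 1/(x * s)^2))"
    using assms by (simp add: real_sqrt_mult)
  also have "s^2 * (1 + 1/(x * s)^2) = 1/x^2 + s^2"
    using assms by (simp add: field_simps power2_eq_square)
  also have "\<dots> = 1 / (cube_step (-(s^2)) x)^2" using cube_step_inverse[OF assms(2) ok] by simp
  also have "sqrt \<dots> = \<bar>1 / cube_step (-(s^2)) x\<bar>" by (metis power_one_over real_sqrt_abs)
  finally show ?thesis
    using cube_step_sign[OF ok] assms(2) by (auto simp: abs_if sgn_if)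
qed

text \<open>A strong cubic step sends \<open>x\<close> to \<open>\<plusminus>1/s + O(s\<^sup>-\<^sup>3)\<close>, with the sign of \<open>x\<close>; a quadratic step then
  shifts \<open>1/x\<close> by \<open>-a\<close>, which changes \<open>1/x\<^sup>2\<close> by about \<open>\<minus>2as\<close> or \<open>+2as\<close> depending on that sign.\<close>
lemma squeeze_shift:
  assumes s: "s > 0" and x: "x \<noteq> 0" and a: "\<bar>a\<bar> \<le> s"
  shows "admissible [Cube (-(s^2)), Quad a] x"
    "1 / run [Cube (-(s^2)), Quad a] x = 1 / cube_step (-(s^2)) x - a"
    "sgn (run [Cube (-(s^2)), Quad a] x) = sgn x"
proof -
  define x1 where "x1 = cube_step (-(s^2)) x"
  have ok1: "1 - (-(s^2))*x^2 > 0" by (simp add: add_pos_nonneg)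
  have sq: "1 / x1^2 = 1/x^2 + s^2" using cube_step_inverse[OF x ok1] unfolding x1_def by simp
  have sg: "(x1 > 0 \<longleftrightarrow> x > 0) \<and> (x1 < 0 \<longleftrightarrow> x < 0)"
    using cube_step_sign[OF ok1] unfolding x1_def .
  then have x1: "x1 \<noteq> 0" using x by (metis linorder_neqE_linordered_idom order_less_irrefl)
  have "1/x1^2 > s^2" using sq x by simp
  then have "x1^2 < 1/s^2" using x1 s by (simp add: field_simps)
  then have "\<bar>x1\<bar>^2 < (1/s)^2" by (simp add: power_divide)
  moreover have "0 \<le> 1/s" using s by simp
  ultimately have "\<bar>x1\<bar> < 1/s" by (rule power_less_imp_less_base)
  then have "s * \<bar>x1\<bar> < 1" using s by (simp add: field_simps)
  moreover have "\<bar>a\<bar> * \<bar>x1\<bar> \<le> s * \<bar>x1\<bar>" using a by (simp add: mult_right_mono)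
  ultimately have "\<bar>a * x1\<bar> < 1" by (simp add: abs_mult)
  then have ok2: "1 - a*x1 > 0" using abs_ge_self[of "a * x1"] by linarith
  then show "admissible [Cube (-(s^2)), Quad a] x"
    using ok1 by (simp add: step_ok_def x1_def[symmetric])
  have run: "run [Cube (-(s^2)), Quad a] x = quad_step a x1" by (simp add: x1_def)
  show "1 / run [Cube (-(s^2)), Quad a] x = 1 / cube_step (-(s^2)) x - a"
    unfolding run x1_def[symmetric] using quad_step_inverse[OF x1 ok2] .
  show "sgn (run [Cube (-(s^2)), Quad a] x) = sgn x"
    unfolding run using quad_step_sign[OF ok2] sg by (auto simp: sgn_if)
qed

text \<open>Undoing the squeeze afterwards, \<open>1/x\<^sup>2\<close> increases by about \<open>-2\<alpha>\<close> for \<open>x > 0\<close> and is unchanged for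
  \<open>x < 0\<close>, up to \<open>O(\<alpha>/(s x))\<close>: with \<open>\<alpha> = -c/2\<close> the word approximates \<open>pow_flow 2 c\<close> for large \<open>s\<close>.\<close>
definition base_word :: "real \<Rightarrow> real \<Rightarrow> step list" where
  "base_word s \<alpha> = [Cube (-(s^2)), Quad (\<alpha>/(2 * s)), Cube (s^2 + \<alpha> + (\<alpha>/(2 * s))^2)]"

lemma base_word_run:
  assumes s: "s > 0" and x: "x \<noteq> 0" and \<alpha>: "\<bar>\<alpha>\<bar> \<le> 2 * s^2"
  defines "E \<equiv> 1/x^2 - \<alpha> - sgn x * \<alpha> * sqrt (1 + 1/(x * s)^2)"
  shows "admissible (base_word s \<alpha>) x \<longleftrightarrow> E > 0"
    "admissible (base_word s \<alpha>) x \<Longrightarrow> 1/(run (base_word s \<alpha>) x)^2 = E \<and> sgn (run (base_word s \<alpha>) x) = sgn x"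
proof -
  define a where "a = \<alpha>/(2 * s)"
  define b where "b = s^2 + \<alpha> + a^2"
  define x2 where "x2 = run [Cube (-(s^2)), Quad a] x"
  have "\<bar>a\<bar> = \<bar>\<alpha>\<bar> / (2 * s)" using s by (simp add: a_def abs_divide)
  also have "\<dots> \<le> 2 * s^2 / (2 * s)" using \<alpha> s by (intro divide_right_mono) auto
  also have "\<dots> = s" using s by (simp add: power2_eq_square)
  finally have a: "\<bar>a\<bar> \<le> s" .
  note sh = squeeze_shift[OF s x a, folded x2_def]
  have x2: "x2 \<noteq> 0" using sh(3) x by (metis sgn_0_0 sgn_zero_iff)
  define u where "u = 1 / cube_step (-(s^2)) x"
  have u2: "u^2 = 1/x^2 + s^2"
    using cube_step_inverse[OF x, of "-(s^2)"] unfolding u_def by (simp add: power_one_over add_pos_nonneg)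
  have au: "2 * a * u = sgn x * \<alpha> * sqrt (1 + 1/(x * s)^2)"
    using squeeze_inverse[OF s x] s unfolding u_def a_def by simp
  have "1/x2^2 = (u - a)^2" using sh(2) unfolding u_def by (metis power_one_over)
  also have "\<dots> = u^2 - 2 * a * u + a^2" by (simp add: power2_diff)
  finally have key: "1/x2^2 - b = E" unfolding u2 au E_def b_def by simp
  have "0 < x2^2" using x2 by simp
  then have ok3: "step_ok (Cube b) x2 \<longleftrightarrow> E > 0"
    using key by (auto simp: step_ok_def pos_less_divide_eq[symmetric])
  have word: "base_word s \<alpha> = [Cube (-(s^2)), Quad a] @ [Cube b]"
    by (simp add: base_word_def a_def b_def)
  show adm: "admissible (base_word s \<alpha>) x \<longleftrightarrow> E > 0"
    unfolding word using sh(1) ok3 by (simp add: x2_def)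
  assume "admissible (base_word s \<alpha>) x"
  then have ok: "1 - b * x2^2 > 0" using ok3 adm by (simp add: step_ok_def)
  have run: "run (base_word s \<alpha>) x = cube_step b x2" unfolding word by (simp add: x2_def)
  have "sgn (cube_step b x2) = sgn x2" using sgn_eqI[OF cube_step_sign[OF ok]] .
  then show "1/(run (base_word s \<alpha>) x)^2 = E \<and> sgn (run (base_word s \<alpha>) x) = sgn x"
    unfolding run using cube_step_inverse[OF x2 ok] key sh(3) by simp
qed

lemma abs_diff_le_of_inverse_squares:
  fixes z P A e :: real
  assumes "z > 0" "P > 0" "1/z^2 = A + e" "1/P^2 = A" "A > 0" "\<bar>e\<bar> \<le> A/2"
  shows "\<bar>z - P\<bar> \<le> sqrt (2 * \<bar>e\<bar> / A^2)"
proof -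
  have Ae: "A + e > 0" using assms(5,6) by (auto simp: abs_le_iff)
  have "z^2 = 1/(A + e)" "P^2 = 1/A" using assms(3,4) by (metis div_by_1 divide_divide_eq_right mult_1 nonzero_mult_div_cancel_left zero_neq_one)+
  then have "\<bar>z^2 - P^2\<bar> = \<bar>1/(A+e) - 1/A\<bar>" by simp
  also have "1/(A+e) - 1/A = -e/(A*(A+e))" using assms(5) Ae by (simp add: field_simps)
  also have "\<bar>-e/(A*(A+e))\<bar> = \<bar>e\<bar>/(A*(A+e))" using assms(5) Ae by (simp add: abs_divide abs_mult)
  also have "\<dots> \<le> \<bar>e\<bar>/(A*(A/2))"
    using assms(5,6) Ae by (intro divide_left_mono mult_left_mono mult_pos_pos) (auto simp: abs_le_iff)
  also have "\<dots> = 2 * \<bar>e\<bar> / A^2" by (simp add: power2_eq_square)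
  finally have "sqrt \<bar>z^2 - P^2\<bar> \<le> sqrt (2 * \<bar>e\<bar> / A^2)" by (rule real_sqrt_le_mono)
  then show ?thesis
    using abs_diff_le_sqrt_abs_diff_squares[of z P] assms(1,2) by linarith
qed

lemma abs_inverse_diff_le_neg:
  fixes z x :: real
  assumes "z < 0" "x < 0"
  shows "\<bar>1/z - 1/x\<bar> \<le> \<bar>1/z^2 - 1/x^2\<bar> * \<bar>x\<bar>"
proof -
  have "1/z = - sqrt (1/z^2)" "1/x = - sqrt (1/x^2)"
    using assms real_sqrt_abs[of "1/z"] real_sqrt_abs[of "1/x"] by (simp_all add: power_one_over)
  then have "\<bar>1/z - 1/x\<bar> = \<bar>sqrt (1/z^2) - sqrt (1/x^2)\<bar>" by simp
  also have "\<dots> \<le> \<bar>1/z^2 - 1/x^2\<bar> / sqrt (1/x^2)"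
    using abs_sqrt_diff_le_div[of "1/z^2" "1/x^2"] assms by simp
  also have "\<dots> = \<bar>1/z^2 - 1/x^2\<bar> * \<bar>x\<bar>" by (simp add: real_sqrt_divide)
  finally show ?thesis .
qed

lemma base_word_pos:
  assumes s: "s > 0" "\<bar>c\<bar> \<le> 4 * s^2" and m: "m > 0" "\<And>x. x \<in> {0..R2} \<Longrightarrow> m \<le> 1 + c*x^2"
    and sR: "\<bar>c\<bar> * R2 \<le> m * s" "\<bar>c\<bar> * R2^3 \<le> s * m^2 * \<eta>^2"
    and \<eta>: "\<eta> > 0" and x: "x \<in> {0..R2}"
  shows "admissible (base_word s (-c/2)) x \<and> \<bar>run (base_word s (-c/2)) x - pow_flow 2 c x\<bar> \<le> \<eta>"
proof (cases "x = 0")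
  case False
  then have xp: "x > 0" using x by simp
  define \<rho> where "\<rho> = sqrt (1 + 1/(x * s)^2) - 1"
  have \<rho>: "0 \<le> \<rho>" "\<rho> \<le> 1/(x * s)"
    using sqrt_one_plus_square_le[of "1/(x * s)"] xp s unfolding \<rho>_def by (auto simp: power_one_over)
  define A where "A = 1/x^2 + c"
  define e where "e = (c/2) * \<rho>"
  have cx: "1 + c*x^2 \<ge> m" using m(2) x by simp
  have Am: "A \<ge> m/x^2" unfolding A_def using cx xp by (simp add: field_simps)
  moreover have "m/x^2 > 0" using m xp by simp
  ultimately have A0: "A > 0" by linarith
  have ae: "\<bar>e\<bar> \<le> (\<bar>c\<bar>/2)/(x * s)"
    using mult_left_mono[OF \<rho>(2), of "\<bar>c\<bar>"] \<rho>(1) unfolding e_def by (simp add: abs_mult)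
  have "\<bar>c\<bar> * x \<le> \<bar>c\<bar> * R2" using x by (simp add: mult_left_mono)
  then have "\<bar>c\<bar> * x \<le> m * s" using sR(1) by linarith
  then have "(\<bar>c\<bar>/2)/(x * s) \<le> (m/x^2)/2" using xp s m by (simp add: field_simps power2_eq_square)
  moreover have "(m/x^2)/2 \<le> A/2" using Am by simp
  ultimately have ae2: "\<bar>e\<bar> \<le> A/2" using ae by (meson order_trans)
  have E: "1/x^2 - (-c/2) - sgn x * (-c/2) * sqrt (1 + 1/(x * s)^2) = A + e"
    using xp unfolding A_def e_def \<rho>_def by (simp add: field_simps)
  have \<alpha>: "\<bar>-c/2\<bar> \<le> 2 * s^2" using s by simp
  have ok: "admissible (base_word s (-c/2)) x"
    using base_word_run(1)[OF s(1) False \<alpha>] E A0 ae2 by (auto simp: abs_le_iff)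
  note r = base_word_run(2)[OF s(1) False \<alpha> ok, unfolded E]
  have "1 + c*x^2 > 0" using cx m by simp
  note P = pow_flow_pos[OF xp this, simplified]
  have "\<bar>run (base_word s (-c/2)) x - pow_flow 2 c x\<bar> \<le> sqrt (2 * \<bar>e\<bar> / A^2)"
    using r xp P A0 ae2 unfolding A_def
    by (intro abs_diff_le_of_inverse_squares) (auto simp: sgn_if split: if_splits)
  also have "2 * \<bar>e\<bar> / A^2 \<le> 2*((\<bar>c\<bar>/2)/(x * s)) / (m/x^2)^2"
    using ae Am m xp by (intro divide_mono mult_left_mono power_mono) auto
  also have "\<dots> = \<bar>c\<bar> * x^3 / (s * m^2)" using xp m s by (simp add: field_simps power2_eq_square power3_eq_cube)
  also have "\<dots> \<le> \<bar>c\<bar> * R2^3 / (s * m^2)"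
    using x xp s m by (intro divide_right_mono mult_left_mono power_mono) auto
  also have "\<dots> \<le> \<eta>^2" using sR(2) s m by (simp add: field_simps)
  finally show ?thesis using ok \<eta> by (simp add: real_sqrt_le_mono order_trans)
qed (use \<eta> in simp)

lemma base_word_neg:
  assumes s: "s > 0" "\<bar>c\<bar> \<le> 4 * s^2" and sR: "\<bar>c\<bar> * R1 < 2 * s" "\<bar>c\<bar> \<le> 2 * s * \<eta>"
    and x: "x \<in> {-R1..<0}"
  shows "admissible (base_word s (-c/2)) x \<and> \<bar>1/run (base_word s (-c/2)) x - 1/x\<bar> \<le> \<eta>"
proof -
  have xn: "x < 0" "\<bar>x\<bar> \<le> R1" using x by auto
  define \<rho> where "\<rho> = sqrt (1 + 1/(x * s)^2) - 1"
  have \<rho>: "0 \<le> \<rho>" "\<rho> \<le> 1/(\<bar>x\<bar> * s)"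
    using sqrt_one_plus_square_le[of "1/(\<bar>x\<bar> * s)"] xn s mult_nonpos_nonneg[of x s] unfolding \<rho>_def
    by (auto simp: power_one_over power_mult_distrib)
  define e where "e = (-c/2) * \<rho>"
  have "\<rho> * \<bar>x\<bar> \<le> 1/(\<bar>x\<bar> * s) * \<bar>x\<bar>" using mult_right_mono[OF \<rho>(2), of "\<bar>x\<bar>"] by simp
  also have "\<dots> = 1/s" using xn by simp
  finally have "\<rho> * \<bar>x\<bar> \<le> 1/s" .
  then have ae: "\<bar>e\<bar> * \<bar>x\<bar> \<le> \<bar>c\<bar> / (2 * s)"
    using mult_left_mono[of "\<rho> * \<bar>x\<bar>" "1/s" "\<bar>c\<bar>/2"] \<rho>(1) unfolding e_def by (simp add: abs_mult)
  have "\<bar>c\<bar> * \<bar>x\<bar> < 2 * s" using sR(1) mult_left_mono[OF xn(2), of "\<bar>c\<bar>"] by simp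
  then have "\<bar>c\<bar> / (2 * s) < 1/\<bar>x\<bar>" using xn s by (simp add: field_simps)
  then have "\<bar>e\<bar> * \<bar>x\<bar> < 1/\<bar>x\<bar>" using ae by linarith
  moreover have xa: "\<bar>x\<bar> > 0" using xn by simp
  ultimately have "\<bar>e\<bar> < 1/\<bar>x\<bar> / \<bar>x\<bar>" using pos_less_divide_eq[OF xa] by blast
  then have ae2: "\<bar>e\<bar> < 1/x^2" by (simp add: power2_eq_square)
  have E: "1/x^2 - (-c/2) - sgn x * (-c/2) * sqrt (1 + 1/(x * s)^2) = 1/x^2 + e"
    using xn unfolding e_def \<rho>_def by (simp add: algebra_simps)
  have \<alpha>: "\<bar>-c/2\<bar> \<le> 2 * s^2" using s by simp
  have ok: "admissible (base_word s (-c/2)) x"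
    using base_word_run(1)[OF s(1) _ \<alpha>] E ae2 xn by (auto simp: abs_less_iff)
  note r = base_word_run(2)[OF s(1) _ \<alpha> ok, unfolded E]
  have neg: "run (base_word s (-c/2)) x < 0" using r xn by (auto simp: sgn_if split: if_splits)
  have "\<bar>1/run (base_word s (-c/2)) x - 1/x\<bar> \<le> \<bar>e\<bar> * \<bar>x\<bar>"
    using abs_inverse_diff_le_neg[OF neg xn(1)] r xn by simp
  also have "\<dots> \<le> \<bar>c\<bar> / (2 * s)" by (rule ae)
  also have "\<dots> \<le> \<eta>" using sR(2) s by (simp add: divide_le_eq mult.commute)
  finally show ?thesis using ok by simp
qed

lemma pow_flow_word_base:
  assumes R: "R1 > 0" "R2 > 0" and cR: "1 + c*R2^2 > 0" and \<eta>: "\<eta> > 0"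
  shows "\<exists>w. pow_flow_word 2 c R1 R2 \<eta> w"
proof -
  define m where "m = min 1 (1 + c*R2^2)"
  have m: "m > 0" "m \<le> 1" "m \<le> 1 + c*R2^2" using cR unfolding m_def by auto
  have mx: "m \<le> 1 + c*x^2" if "x \<in> {0..R2}" for x
  proof (cases "c \<ge> 0")
    case True
    then have "0 \<le> c*x^2" by simp
    then show ?thesis using m by simp
  next
    case False
    then have "c*R2^2 \<le> c*x^2" using that by (simp add: mult_left_mono_neg power_mono)
    then show ?thesis using m by simp
  qed
  define T where "T = R2/m + R2^3/(m^2*\<eta>^2) + R1 + 1/\<eta> + 1"
  define s where "s = 1 + \<bar>c\<bar> * T"
  have terms: "0 \<le> R2/m" "0 \<le> R2^3/(m^2*\<eta>^2)" "0 \<le> R1" "0 \<le> 1/\<eta>"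
    using m R \<eta> by auto
  have le_s: "\<bar>c\<bar> * t < s" if "t \<le> T" for t
    using mult_left_mono[OF that, of "\<bar>c\<bar>"] unfolding s_def by simp
  have s1: "s \<ge> 1" unfolding s_def T_def using terms by simp
  have "\<bar>c\<bar> < s" using le_s[of 1] terms unfolding T_def by simp
  also have "s \<le> 4 * s^2" using s1 by (simp add: power2_eq_square)
  finally have c4: "\<bar>c\<bar> \<le> 4 * s^2" by simp
  have "\<bar>c\<bar> * (R2/m) < s" "\<bar>c\<bar> * (R2^3/(m^2*\<eta>^2)) < s" "\<bar>c\<bar> * R1 < s" "\<bar>c\<bar> * (1/\<eta>) < s"
    using terms by (intro le_s; simp add: T_def)+
  then have sR: "\<bar>c\<bar> * R2 \<le> m * s" "\<bar>c\<bar> * R2^3 \<le> s * m^2 * \<eta>^2" "\<bar>c\<bar> * R1 < 2 * s"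
    "\<bar>c\<bar> \<le> 2 * s * \<eta>"
    using m \<eta> s1 by (simp_all add: field_simps)
  have s0: "s > 0" using s1 by simp
  show ?thesis
    using base_word_pos[OF s0 c4 m(1) mx sR(1,2) \<eta>] base_word_neg[OF s0 c4 sR(3,4)]
    by (intro exI pow_flow_wordI) auto
qed

text \<open>On \<open>x > 0\<close> the outer steps of the zoom act like \<open>x \<mapsto> x\<^sup>2\<close> and \<open>y \<mapsto> \<surd>y\<close> up to \<open>O(1/s)\<close>,
  while the negative half-line is sent close to \<open>0\<^sup>-\<close>, where the estimate of the inner word in the
  coordinate \<open>1/x\<close> applies. As \<open>pow_flow (2N) c x = \<surd>(pow_flow N c (x\<^sup>2))\<close>, zooming doubles the exponent.\<close>
definition zoom_word :: "real \<Rightarrow> step list \<Rightarrow> step list" where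
  "zoom_word s W = [Cube (-(s^2)), Quad s] @ map (step_rescale (2 * s)) W @ [Quad (-s), Cube (s^2)]"

lemma zoom_in:
  assumes s: "s > 0" and x: "x \<noteq> 0"
  defines "y \<equiv> run [Cube (-(s^2)), Quad s] x / (2 * s)"
  shows "admissible [Cube (-(s^2)), Quad s] x" "sgn y = sgn x" "(1/y)^2/(4 * s^2) + 1/y = 1/x^2"
proof -
  have "\<bar>s\<bar> \<le> s" using s by simp
  note sh = squeeze_shift[OF s x this]
  show "admissible [Cube (-(s^2)), Quad s] x" using sh(1) by simp
  show "sgn y = sgn x" using sh(3) s unfolding y_def by (simp add: sgn_divide)
  define u where "u = 1 / cube_step (-(s^2)) x"
  have u2: "u^2 = 1/x^2 + s^2"
    using cube_step_inverse[OF x, of "-(s^2)"] unfolding u_def by (simp add: power_one_over add_pos_nonneg)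
  have "1/y = 2 * s * (1 / run [Cube (-(s^2)), Quad s] x)" unfolding y_def by simp
  also have "\<dots> = 2 * s * (u - s)" using sh(2) unfolding u_def by simp
  finally have "1/y = 2 * s * (u - s)" .
  then have "(1/y)^2/(4 * s^2) + 1/y = (u - s)^2 + 2 * s * (u - s)" using s by (simp add: power_mult_distrib)
  also have "\<dots> = u^2 - s^2" by (simp add: power2_diff algebra_simps power2_eq_square)
  finally have "(1/y)^2/(4 * s^2) + 1/y = u^2 - s^2" .
  then show "(1/y)^2/(4 * s^2) + 1/y = 1/x^2" using u2 by simp
qed

lemma zoom_out:
  assumes s: "s > 0" and y: "y \<noteq> 0" and c: "y > 0 \<or> 1/y < -4 * s^2"
  defines "z \<equiv> run [Quad (-s), Cube (s^2)] (2 * s * y)"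
  shows "admissible [Quad (-s), Cube (s^2)] (2 * s * y)" "sgn z = sgn y"
    "1/z^2 = (1/y)^2/(4 * s^2) + 1/y"
proof -
  define x3 where "x3 = 2 * s * y"
  have x3: "x3 \<noteq> 0" using s y unfolding x3_def by simp
  have ok3: "1 - (-s)*x3 > 0"
  proof (cases "y > 0")
    case False
    then have "y < 0" using y by simp
    moreover from c False have "1/y < -4 * s^2" by simp
    then have "1/y < -2 * s^2" using zero_le_power2[of s] by linarith
    ultimately have "1 > -2 * s^2 * y" by (simp add: field_simps)
    then show ?thesis unfolding x3_def by (simp add: algebra_simps power2_eq_square)
  qed (use s in \<open>simp add: x3_def add_pos_pos\<close>)
  define x4 where "x4 = quad_step (-s) x3"
  have sg4: "sgn x4 = sgn y"
    using sgn_eqI[OF quad_step_sign[OF ok3]] s unfolding x4_def x3_def by (simp add: sgn_mult)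
  then have x4: "x4 \<noteq> 0" using y by (metis sgn_0_0 sgn_zero_iff)
  have i4: "1/x4 = (1/y)/(2 * s) + s"
    using quad_step_inverse[OF x3 ok3] s unfolding x4_def x3_def by (simp add: field_simps)
  have "\<bar>1/x4\<bar> > s"
  proof (cases "y > 0")
    case True then show ?thesis using i4 s by simp
  next
    case False
    then have "(1/y)/(2 * s) < (-4 * s^2)/(2 * s)" using c s by (intro divide_strict_right_mono) auto
    then show ?thesis using i4 s by (simp add: power2_eq_square)
  qed
  then have "s^2 < \<bar>1/x4\<bar>^2" using s by (intro power_strict_mono) auto
  then have "s^2 < 1/x4^2" by (simp add: power_one_over)
  then have ok4: "1 - s^2 * x4^2 > 0" using x4 by (simp add: pos_less_divide_eq)
  show "admissible [Quad (-s), Cube (s^2)] (2 * s * y)"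
    using ok3 ok4 by (simp add: step_ok_def x3_def[symmetric] x4_def[symmetric])
  have z: "z = cube_step (s^2) x4" unfolding z_def x4_def x3_def by simp
  show "sgn z = sgn y" using sgn_eqI[OF cube_step_sign[OF ok4]] sg4 unfolding z by simp
  have "1/z^2 = 1/x4^2 - s^2" using cube_step_inverse[OF x4 ok4] z by simp
  also have "\<dots> = ((1/y)/(2 * s) + s)^2 - s^2" using i4 by (metis power_one_over)
  also have "\<dots> = ((1/y)/(2 * s))^2 + 2 * ((1/y)/(2 * s)) * s" by (simp add: power2_sum)
  also have "\<dots> = (1/y)^2/(4 * s^2) + 1/y" using s by (simp add: power_divide power_mult_distrib)
  finally show "1/z^2 = (1/y)^2/(4 * s^2) + 1/y" .
qed

lemma zoom_word_run:
  fixes x :: real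
  assumes s: "s > 0"
  defines "y \<equiv> run [Cube (-(s^2)), Quad s] x / (2 * s)"
  shows "run (zoom_word s W) x = run [Quad (-s), Cube (s^2)] (2 * s * run W y)"
    "admissible (zoom_word s W) x \<longleftrightarrow> admissible [Cube (-(s^2)), Quad s] x \<and> admissible W y
       \<and> admissible [Quad (-s), Cube (s^2)] (2 * s * run W y)"
proof -
  have x2: "run [Cube (-(s^2)), Quad s] x = (2 * s) * y" using s unfolding y_def by simp
  show "run (zoom_word s W) x = run [Quad (-s), Cube (s^2)] (2 * s * run W y)"
    unfolding zoom_word_def run_append x2 using run_rescale(1)[of "2 * s" W y] s by simp
  show "admissible (zoom_word s W) x \<longleftrightarrow> admissible [Cube (-(s^2)), Quad s] x \<and> admissible W y
       \<and> admissible [Quad (-s), Cube (s^2)] (2 * s * run W y)"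
    unfolding zoom_word_def admissible_append run_append x2
    using run_rescale[of "2 * s" W y] s by simp
qed

lemma zoom_relation_pos:
  fixes s y z :: real
  assumes s: "s > 0" and y: "y > 0" and z: "z > 0" and rel: "1/z^2 = (1/y)^2/(4 * s^2) + 1/y"
  shows "z^2 \<le> y" "y \<le> z^2 + 1/(4 * s^2)"
proof -
  have p: "1 + 4 * s^2 * y > 0" using s y by (simp add: add_pos_pos)
  have "1/z^2 = (1 + 4 * s^2 * y)/(4 * s^2 * y^2)" using rel s y by (simp add: field_simps power2_eq_square)
  then have "z^2 = 4 * s^2 * y^2/(1 + 4 * s^2 * y)" by (metis divide_divide_eq_right div_by_1 mult_1 nonzero_mult_div_cancel_left zero_neq_one)
  then have d: "y - z^2 = y/(1 + 4 * s^2 * y)" using s y p by (simp add: field_simps power2_eq_square)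
  have "y/(1 + 4 * s^2 * y) > 0" using p y by simp
  then show "z^2 \<le> y" using d by simp
  have "y/(1 + 4 * s^2 * y) \<le> y/(4 * s^2 * y)" using s y p by (intro divide_left_mono) auto
  then show "y \<le> z^2 + 1/(4 * s^2)" using d y by simp
qed

lemma zoom_relation_pos_sqrt:
  assumes "s > 0" "y > 0" "z > 0" "1/z^2 = (1/y)^2/(4 * s^2) + 1/y"
  shows "\<bar>z - sqrt y\<bar> \<le> 1/(2 * s)"
proof -
  have "\<bar>z^2 - (sqrt y)^2\<bar> \<le> 1/(4 * s^2)" using zoom_relation_pos[OF assms] assms(2) by simp
  then have "sqrt \<bar>z^2 - (sqrt y)^2\<bar> \<le> sqrt (1/(4 * s^2))" by (rule real_sqrt_le_mono)
  also have "sqrt (1/(4 * s^2)) = 1/(2 * s)" using assms(1) by (simp add: real_sqrt_divide real_sqrt_mult)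
  finally show ?thesis using abs_diff_le_sqrt_abs_diff_squares[of z "sqrt y"] assms(2,3) by simp
qed

lemma zoom_relation_neg:
  fixes s x u :: real
  assumes s: "s > 0" and x: "x < 0" and R1: "-R1 \<le> x" and sR: "s * R1 \<ge> 1"
    and u: "u > 0" and id: "u^2/(4 * s^2) - u = 1/x^2"
  shows "u \<ge> 4 * s^2 + 1/(2*R1^2)" "u \<le> 4 * s^2 + 2 * s/\<bar>x\<bar>"
proof -
  have R1p: "R1 > 0" using x R1 by linarith
  have ax: "0 < \<bar>x\<bar>" "\<bar>x\<bar> \<le> R1" using x R1 by auto
  have key: "u * (u - 4 * s^2) = 4 * s^2/x^2" using id s by (simp add: field_simps power2_eq_square)
  have "u * (u - 4 * s^2) > 0" unfolding key using s x by simp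
  then have d0: "u - 4 * s^2 > 0" using u by (simp add: zero_less_mult_iff)
  show "u \<ge> 4 * s^2 + 1/(2*R1^2)"
  proof (rule ccontr)
    assume "\<not> ?thesis"
    then have dl: "u - 4 * s^2 < 1/(2*R1^2)" by simp
    have "u * (u - 4 * s^2) < (4 * s^2 + 1/(2*R1^2)) * (1/(2*R1^2))"
      using dl d0 u by (intro mult_strict_mono) auto
    also have "\<dots> = 2 * s^2/R1^2 + 1/(4*R1^4)" using R1p by (simp add: field_simps power2_eq_square power4_eq_xxxx)
    also have "\<dots> \<le> 4 * s^2/R1^2"
    proof -
      have "1 \<le> (s*R1)^2" using sR by (simp add: one_le_power)
      then have "1/(4*R1^4) \<le> s^2/(4*R1^2)" using R1p by (simp add: field_simps power2_eq_square power4_eq_xxxx)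
      moreover have "s^2/(4*R1^2) \<le> 2 * s^2/R1^2" using R1p by (simp add: field_simps)
      ultimately show ?thesis by (simp add: field_simps)
    qed
    also have "\<dots> \<le> 4 * s^2/x^2"
    proof -
      have "\<bar>x\<bar>^2 \<le> R1^2" using ax by (intro power_mono) auto
      then have "x^2 \<le> R1^2" by simp
      then show ?thesis using s x R1p by (intro divide_left_mono) auto
    qed
    finally show False using key by simp
  qed
  have "(u - 4 * s^2)^2 \<le> u * (u - 4 * s^2)"
    using d0 by (simp add: power2_eq_square mult_right_mono)
  also have "\<dots> = (2 * s/\<bar>x\<bar>)^2" unfolding key by (simp add: power_divide)
  finally have "(u - 4 * s^2)^2 \<le> (2 * s/\<bar>x\<bar>)^2" .
  moreover have "0 \<le> 2 * s/\<bar>x\<bar>" using s by simp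
  ultimately have "u - 4 * s^2 \<le> 2 * s/\<bar>x\<bar>" by (rule power2_le_imp_le)
  then show "u \<le> 4 * s^2 + 2 * s/\<bar>x\<bar>" by simp
qed

lemma zoom_word_pos:
  assumes s: "s > 0" and N: "N > 0" and cR: "1 + c*R2'^N > 0" and R2': "R2^2 + 1/(4 * s^2) \<le> R2'"
    and W: "admissible_on W {0..R2'}" "\<forall>y\<in>{0..R2'}. \<bar>run W y - pow_flow N c y\<bar> \<le> (\<eta>/3)^2"
    and unif: "\<forall>a\<in>{0..R2'}. \<forall>b\<in>{0..R2'}. \<bar>b - a\<bar> \<le> 1/(4 * s^2) \<longrightarrow>
       \<bar>pow_flow N c b - pow_flow N c a\<bar> \<le> (\<eta>/3)^2"
    and s\<eta>: "1/(2 * s) \<le> \<eta>/3" and \<eta>: "\<eta> > 0" and x: "x \<in> {0..R2}"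
  shows "admissible (zoom_word s W) x \<and> \<bar>run (zoom_word s W) x - pow_flow (2*N) c x\<bar> \<le> \<eta>"
proof (cases "x = 0")
  case True
  then show ?thesis using \<eta> by (simp add: zoom_word_def)
next
  case False
  then have xp: "x > 0" using x by simp
  define y where "y = run [Cube (-(s^2)), Quad s] x / (2 * s)"
  note zin = zoom_in[OF s False, folded y_def]
  have yp: "y > 0" using zin(2) xp by (simp add: sgn_if split: if_splits)
  note y_bounds = zoom_relation_pos[OF s yp xp zin(3)[symmetric]]
  have x2R: "x^2 \<le> R2^2" using x xp by (simp add: power_mono)
  have yR: "y \<in> {0..R2'}" and x2R': "x^2 \<in> {0..R2'}" using y_bounds R2' x2R yp by auto
  have pos: "1 + c*t^N > 0" if "t \<in> {0..R2'}" for t using one_plus_mult_pow_pos[OF cR] that by simp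
  define y' where "y' = run W y"
  have aW: "admissible W y" using W(1) yR unfolding admissible_on_def by auto
  have y'p: "y' > 0" using run_sign[OF aW] yp unfolding y'_def by simp
  define z where "z = run [Quad (-s), Cube (s^2)] (2 * s * y')"
  have "y' \<noteq> 0" using y'p by simp
  note zout = zoom_out[OF s this disjI1[OF y'p], folded z_def]
  have zp: "z > 0" using zout(2) y'p by (simp add: sgn_if split: if_splits)
  have run: "run (zoom_word s W) x = z" "admissible (zoom_word s W) x"
    using zoom_word_run[OF s, where x=x and W=W] zout(1) zin(1) aW y'p unfolding y_def[symmetric] y'_def z_def by auto
  have P: "pow_flow N c y > 0" "pow_flow N c (x^2) > 0"
    using pow_flow_pos(1)[OF yp pos[OF yR] N] pow_flow_pos(1)[of "x^2" c N] xp pos[OF x2R'] N by auto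
  have "\<bar>z - sqrt y'\<bar> \<le> \<eta>/3" using zoom_relation_pos_sqrt[OF s y'p zp zout(3)] s\<eta> by linarith
  moreover have "\<bar>sqrt y' - sqrt (pow_flow N c y)\<bar> \<le> \<eta>/3"
    using W(2) yR y'p P(1) \<eta> unfolding y'_def by (intro abs_sqrt_diff_le_of_square_bound) auto
  moreover have "\<bar>sqrt (pow_flow N c y) - sqrt (pow_flow N c (x^2))\<bar> \<le> \<eta>/3"
    using unif yR x2R' y_bounds P \<eta> by (intro abs_sqrt_diff_le_of_square_bound) auto
  moreover have "pow_flow (2*N) c x = sqrt (pow_flow N c (x^2))"
    using pow_flow_double[OF xp _ N] pos[OF x2R'] by (simp add: power_mult)
  ultimately show ?thesis using run by linarith
qed

lemma zoom_neg_error: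
  fixes s x u u' \<eta>' R1 :: real
  assumes s: "s \<ge> 1" and x: "x \<noteq> 0" "\<bar>x\<bar> \<le> R1" and \<eta>': "0 < \<eta>'" "\<eta>' \<le> 1"
    and u: "u > 0" "u \<le> 4 * s^2 + 2 * s/\<bar>x\<bar>" and u': "u' > 4 * s^2" "\<bar>u' - u\<bar> \<le> \<eta>'"
  shows "\<bar>(u'^2/(4 * s^2) - u') - (u^2/(4 * s^2) - u)\<bar> * \<bar>x\<bar> \<le> \<eta>' * (2*R1 + 1)"
proof -
  have "1 \<le> s^2" using one_le_power[OF s, of 2] .
  then have s4: "4 * s^2 \<ge> 1" by simp
  have k: "(u'^2/(4 * s^2) - u') - (u^2/(4 * s^2) - u) = (u' - u) * ((u' + u)/(4 * s^2) - 1)"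
    using s by (simp add: field_simps power2_eq_square)
  have f1: "(u' + u)/(4 * s^2) - 1 \<ge> 0" using u u' s by (simp add: field_simps)
  have "u' + u \<le> 2*u + \<eta>'" using u' by (simp add: abs_le_iff)
  also have "\<dots> \<le> 8 * s^2 + 4 * s/\<bar>x\<bar> + \<eta>'" using u by simp
  finally have "(u' + u)/(4 * s^2) \<le> (8 * s^2 + 4 * s/\<bar>x\<bar> + \<eta>')/(4 * s^2)"
    using s by (intro divide_right_mono) auto
  also have "\<dots> = 2 + 1/(s * \<bar>x\<bar>) + \<eta>'/(4 * s^2)" using s x by (simp add: field_simps power2_eq_square)
  finally have f2: "(u' + u)/(4 * s^2) - 1 \<le> 1 + 1/(s * \<bar>x\<bar>) + \<eta>'/(4 * s^2)" by simp
  have "\<bar>(u'^2/(4 * s^2) - u') - (u^2/(4 * s^2) - u)\<bar> * \<bar>x\<bar>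
      \<le> \<eta>' * (1 + 1/(s * \<bar>x\<bar>) + \<eta>'/(4 * s^2)) * \<bar>x\<bar>"
    unfolding k abs_mult using u' f1 f2 by (intro mult_right_mono mult_mono) auto
  also have "\<dots> = \<eta>' * (\<bar>x\<bar> + 1/s + \<eta>' * \<bar>x\<bar>/(4 * s^2))" using x s by (simp add: field_simps)
  also have "\<dots> \<le> \<eta>' * (R1 + 1 + R1)"
  proof -
    have "\<eta>' * \<bar>x\<bar> \<le> 1 * R1" using \<eta>' x by (intro mult_mono) auto
    moreover have "\<eta>' * \<bar>x\<bar>/(4 * s^2) \<le> \<eta>' * \<bar>x\<bar>/1"
      using \<eta>'(1) s4 by (intro divide_left_mono) auto
    moreover have "1/s \<le> 1" using s by simp
    ultimately show ?thesis using x \<eta>'(1) by (intro mult_left_mono) auto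
  qed
  finally show ?thesis by simp
qed

lemma zoom_word_neg:
  assumes s: "s \<ge> 1" "s * R1 \<ge> 1"
    and \<eta>': "0 < \<eta>'" "\<eta>' \<le> 1" "\<eta>' \<le> 1/(4*R1^2)" "\<eta>' * (2*R1 + 1) \<le> \<eta>"
    and W: "admissible_on W {-1..<0}" "\<forall>y\<in>{-1..<0}. \<bar>1/run W y - 1/y\<bar> \<le> \<eta>'"
    and x: "x \<in> {-R1..<0}"
  shows "admissible (zoom_word s W) x \<and> \<bar>1/run (zoom_word s W) x - 1/x\<bar> \<le> \<eta>"
proof -
  have s0: "s > 0" and xn: "x < 0" "-R1 \<le> x" and R1: "R1 > 0" using s x by auto
  define y where "y = run [Cube (-(s^2)), Quad s] x / (2 * s)"
  have "x \<noteq> 0" using xn by simp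
  note zin = zoom_in[OF s0 this, folded y_def]
  have yn: "y < 0" using zin(2) xn by (simp add: sgn_if split: if_splits)
  define u where "u = -1/y"
  have u: "u > 0" "u^2/(4 * s^2) - u = 1/x^2" using zin(3) yn unfolding u_def by (auto simp: power2_eq_square)
  note u_bounds = zoom_relation_neg[OF s0 xn s(2) u]
  have "1 \<le> s^2" using one_le_power[OF s(1), of 2] .
  moreover have "0 \<le> 1/(2*R1^2)" by simp
  ultimately have "u \<ge> 1" using u_bounds(1) by linarith
  then have yR: "y \<in> {-1..<0}" using yn unfolding u_def by (simp add: field_simps)
  then have aW: "admissible W y" using W(1) unfolding admissible_on_def by blast
  define y' where "y' = run W y"
  have y'n: "y' < 0" using run_sign[OF aW] yn unfolding y'_def by simp
  define u' where "u' = -1/y'"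
  have "\<bar>1/y' - 1/y\<bar> \<le> \<eta>'" using W(2) yR unfolding y'_def by blast
  then have du: "\<bar>u' - u\<bar> \<le> \<eta>'" unfolding u_def u'_def by (simp add: abs_minus_commute)
  have "1/(4*R1^2) < 1/(2*R1^2)" using R1 by (simp add: field_simps)
  then have u'b: "u' > 4 * s^2" using du u_bounds(1) \<eta>'(3) by (simp add: abs_le_iff)
  then have "1/y' < -4 * s^2" unfolding u'_def by simp
  have "y' \<noteq> 0" using y'n by simp
  define z where "z = run [Quad (-s), Cube (s^2)] (2 * s * y')"
  note zout = zoom_out[OF s0 \<open>y' \<noteq> 0\<close> disjI2[OF \<open>1/y' < -4 * s^2\<close>], folded z_def]
  have zn: "z < 0" using zout(2) y'n by (simp add: sgn_if split: if_splits)
  have run: "run (zoom_word s W) x = z" "admissible (zoom_word s W) x"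
    using zoom_word_run[OF s0, where x=x and W=W] zout(1) zin(1) aW xn
    unfolding y_def[symmetric] y'_def z_def by auto
  have "\<bar>x\<bar> \<le> R1" using xn by simp
  have "1/z^2 = u'^2/(4 * s^2) - u'" using zout(3) y'n unfolding u'_def by (simp add: power2_eq_square)
  then have "\<bar>1/z - 1/x\<bar> \<le> \<bar>(u'^2/(4 * s^2) - u') - (u^2/(4 * s^2) - u)\<bar> * \<bar>x\<bar>"
    using abs_inverse_diff_le_neg[OF zn xn(1)] u(2) by simp
  also have "\<dots> \<le> \<eta>' * (2*R1 + 1)"
    using zoom_neg_error[OF s(1) \<open>x \<noteq> 0\<close> _ \<eta>'(1,2) u(1) u_bounds(2) u'b du] \<open>\<bar>x\<bar> \<le> R1\<close> by blast
  finally show ?thesis using run \<eta>'(4) by simp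
qed

lemma pow_flow_word_double:
  assumes N: "N > 0"
    and IH: "\<And>R1 R2 \<eta>. R1 > 0 \<Longrightarrow> R2 > 0 \<Longrightarrow> 1 + c*R2^N > 0 \<Longrightarrow> \<eta> > 0 \<Longrightarrow>
      \<exists>w. pow_flow_word N c R1 R2 \<eta> w"
    and R: "R1 > 0" "R2 > 0" and cR: "1 + c*R2^(2*N) > 0" and \<eta>: "\<eta> > 0"
  shows "\<exists>w. pow_flow_word (2*N) c R1 R2 \<eta> w"
proof -
  have "1 + c*(R2^2)^N > 0" using cR by (simp add: power_mult)
  then obtain R2' where R2': "R2' > R2^2" "1 + c*R2'^N > 0" by (rule one_plus_mult_pow_pos_beyond)
  have "R2^2 > 0" using R by simp
  then have R2'p: "R2' > 0" using R2' by linarith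
  define \<eta>' where "\<eta>' = min (min 1 (1/(4*R1^2))) (min (\<eta>/(2*R1+1)) ((\<eta>/3)^2))"
  have "\<eta>' > 0" "\<eta>' \<le> 1" "\<eta>' \<le> 1/(4*R1^2)" "\<eta>' \<le> \<eta>/(2*R1+1)" "\<eta>' \<le> (\<eta>/3)^2"
    unfolding \<eta>'_def using R \<eta> by auto
  then have \<eta>': "\<eta>' > 0" "\<eta>' \<le> 1" "\<eta>' \<le> 1/(4*R1^2)" "\<eta>' * (2*R1+1) \<le> \<eta>" "\<eta>' \<le> (\<eta>/3)^2"
    using R by (simp_all add: pos_le_divide_eq)
  obtain W where W: "pow_flow_word N c 1 R2' \<eta>' W" using IH[of 1 R2' \<eta>'] R2'p R2'(2) \<eta>'(1) by auto
  have "continuous_on {0..R2'} (pow_flow N c)"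
    using continuous_on_pow_flow one_plus_mult_pow_pos[OF R2'(2)] by auto
  then obtain \<delta> where \<delta>: "\<delta> > 0" "\<And>a b. a \<in> {0..R2'} \<Longrightarrow> b \<in> {0..R2'} \<Longrightarrow> dist b a < \<delta> \<Longrightarrow>
      dist (pow_flow N c b) (pow_flow N c a) < (\<eta>/3)^2"
    using uniformly_continuous_onE[OF compact_uniformly_continuous[OF _ compact_Icc], of _ _ _ "(\<eta>/3)^2"] \<eta>
    by (metis zero_less_divide_iff zero_less_numeral zero_less_power)
  define s where "s = 1 + 1/R1 + 1/(R2' - R2^2) + 1/\<delta> + 3/\<eta>"
  have "0 < 1/R1" "0 < 1/(R2' - R2^2)" "0 < 1/\<delta>" "0 < 3/\<eta>" using R R2' \<delta> \<eta> by auto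
  then have sc: "s \<ge> 1" "s \<ge> 1/R1" "s \<ge> 1/(R2' - R2^2)" "s > 1/\<delta>" "s \<ge> 3/\<eta>"
    unfolding s_def by linarith+
  have s4: "s \<le> 4 * s^2" using sc(1) by (simp add: power2_eq_square)
  have sR: "s * R1 \<ge> 1" using sc(2) R by (simp add: field_simps)
  have "1/(R2' - R2^2) \<le> 4 * s^2" "1/\<delta> < 4 * s^2" using sc s4 by linarith+
  then have b: "R2^2 + 1/(4 * s^2) \<le> R2'" "1/(4 * s^2) < \<delta>"
    using R2' \<delta> sc(1) by (simp_all add: field_simps)
  have s\<eta>: "1/(2 * s) \<le> \<eta>/3" using sc(1,5) \<eta> by (simp add: field_simps)
  have unif: "\<forall>a\<in>{0..R2'}. \<forall>b\<in>{0..R2'}. \<bar>b - a\<bar> \<le> 1/(4 * s^2) \<longrightarrow>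
      \<bar>pow_flow N c b - pow_flow N c a\<bar> \<le> (\<eta>/3)^2"
    using \<delta>(2) b(2) by (force simp: dist_real_def)
  have W_pos: "admissible_on W {0..R2'}" "\<forall>y\<in>{0..R2'}. \<bar>run W y - pow_flow N c y\<bar> \<le> (\<eta>/3)^2"
    using W \<eta>'(5) unfolding pow_flow_word_def admissible_on_def by force+
  have W_neg: "admissible_on W {-1..<0}" "\<forall>y\<in>{-1..<0}. \<bar>1/run W y - 1/y\<bar> \<le> \<eta>'"
    using W R2'p unfolding pow_flow_word_def admissible_on_def by auto
  show ?thesis
    using zoom_word_pos[OF _ N R2'(2) b(1) W_pos unif s\<eta> \<eta>] zoom_word_neg[OF sc(1) sR \<eta>'(1-4) W_neg] sc(1)
    by (intro exI pow_flow_wordI) auto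
qed

lemma pow_flow_word_exists:
  assumes "k \<ge> 1" "R1 > 0" "R2 > 0" "1 + c*R2^(2^k) > 0" "\<eta> > 0"
  shows "\<exists>w. pow_flow_word (2^k) c R1 R2 \<eta> w"
  using assms
proof (induction k arbitrary: R1 R2 \<eta> rule: nat_induct_at_least)
  case base
  then show ?case using pow_flow_word_base by simp
next
  case (Suc k)
  then show ?case using pow_flow_word_double[of "2^k" c R1 R2 \<eta>] by simp
qed

lemma approximable_on_pow_flow:
  assumes k: "k \<ge> 1" and pq: "p < 0" "0 < q" and cq: "1 + c*q^(2^k) > 0"
  shows "approximable_on (pow_flow (2^k) c) p q"
  unfolding approximable_on_def
proof (intro allI impI)
  fix \<eta> :: real assume \<eta>: "\<eta> > 0"
  define R where "R = -p"
  have R: "R > 0" using pq unfolding R_def by simp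
  define \<eta>' where "\<eta>' = min \<eta> (min (\<eta>/(2*R^2)) (1/(2*R)))"
  have \<eta>': "\<eta>' > 0" "\<eta>' \<le> \<eta>/(2*R^2)" "\<eta>' \<le> 1/(2*R)" "\<eta>' \<le> \<eta>"
    unfolding \<eta>'_def using R \<eta> by auto
  obtain w where w: "pow_flow_word (2^k) c R q \<eta>' w"
    using pow_flow_word_exists[OF k R pq(2) cq \<eta>'(1)] by blast
  have "\<bar>run w x - pow_flow (2^k) c x\<bar> \<le> \<eta>" if x: "x \<in> {p..q}" for x
  proof (cases "x \<ge> 0")
    case True
    then have "x \<in> {0..q}" using x by simp
    then show ?thesis using w \<eta>'(4) unfolding pow_flow_word_def by fastforce
  next
    case False
    then have xn: "x < 0" "-R \<le> x" using x unfolding R_def by auto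
    have "admissible w x" using w x unfolding pow_flow_word_def admissible_on_def R_def by auto
    then have "run w x < 0" using run_sign xn by blast
    moreover have "\<bar>1/run w x - 1/x\<bar> \<le> \<eta>'" using w xn unfolding pow_flow_word_def by auto
    ultimately have "\<bar>run w x - x\<bar> \<le> 2*R^2*\<eta>'"
      using reciprocal_close_imp_close[OF xn _ _ \<eta>'(3)] by blast
    also have "\<dots> \<le> \<eta>" using \<eta>'(2) R by (simp add: field_simps)
    finally show ?thesis using xn by simp
  qed
  then show "\<exists>w. admissible_on w {p..q} \<and> (\<forall>x\<in>{p..q}. \<bar>run w x - pow_flow (2 ^ k) c x\<bar> \<le> \<eta>)"
    using w unfolding pow_flow_word_def R_def by auto
qed

lemma approximable_pow_flow:
  assumes "k \<ge> 1" "c \<ge> 0"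
  shows "approximable (pow_flow (2^k) c)"
  unfolding approximable_def
proof (intro allI impI conjI)
  fix R :: real assume R: "R > 0"
  have pos: "1 + c*x^(2^k) > 0" if "x \<ge> 0" for x using assms that by (simp add: add_pos_nonneg)
  show "approximable_on (pow_flow (2^k) c) (-R) R" using approximable_on_pow_flow assms R pos by simp
  show "continuous_on {-R..R} (pow_flow (2^k) c)" using continuous_on_pow_flow pos by simp
qed

section \<open>Adjusting the positive half-line\<close>

definition half_line_map :: "(real \<Rightarrow> real) \<Rightarrow> bool" where
  "half_line_map G \<longleftrightarrow> approximable G \<and> (\<forall>z\<le>0. G z = z) \<and> (\<forall>z>0. G z > 0)
     \<and> strict_mono_on {0<..} G"

lemma half_line_mapD:
  assumes "half_line_map G"
  shows "approximable G" "z \<le> 0 \<Longrightarrow> G z = z" "z > 0 \<Longrightarrow> G z > 0"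
    "0 < a \<Longrightarrow> a < b \<Longrightarrow> G a < G b" "0 < a \<Longrightarrow> a \<le> b \<Longrightarrow> G a \<le> G b"
  using assms unfolding half_line_map_def
  by (auto simp: strict_mono_onD strict_mono_on_leD)

lemma half_line_map_id: "half_line_map id"
  unfolding half_line_map_def by (simp add: approximable_id strict_mono_on_def)

lemma half_line_map_comp:
  assumes "half_line_map F" "half_line_map G"
  shows "half_line_map (G \<circ> F)"
  using half_line_mapD[OF assms(1)] half_line_mapD[OF assms(2)]
  unfolding half_line_map_def by (auto simp: approximable_comp strict_mono_on_def)

lemma half_line_map_pow_flow:
  assumes "k \<ge> 1" "c \<ge> 0"
  shows "half_line_map (pow_flow (2^k) c)"
proof -
  have "1 + c*b^(2^k) > 0" if "b > 0" for b using assms that by (simp add: add_pos_nonneg)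
  then show ?thesis
    unfolding half_line_map_def strict_mono_on_def
    using approximable_pow_flow[OF assms] pow_flow_strict_mono(2)[of _ _ c "2^k"] pow_flow_pos(1)[of _ c "2^k"]
    by auto
qed

text \<open>A flow with \<open>c \<ge> 0\<close> only moves points down. Following \<open>pow_flow (2M) d\<close> by \<open>pow_flow M (-\<surd>d)\<close>
  gives \<open>1/G(z)\<^sup>M = \<surd>(1/z\<^sup>2\<^sup>M + d) - \<surd>d\<close>: points move up, and small ones by a relative amount
  \<open>O(\<surd>d z\<^sup>M)\<close> only.\<close>
definition lift_map :: "nat \<Rightarrow> real \<Rightarrow> real \<Rightarrow> real" where
  "lift_map M d = pow_flow M (-(sqrt d)) \<circ> pow_flow (2*M) d"

lemma lift_map_inner:
  fixes z d :: real
  assumes z: "z > 0" and d: "d \<ge> 0" and M: "M > 0"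
  shows "pow_flow (2*M) d z > 0" "1/(pow_flow (2*M) d z)^M = sqrt (1/z^(2*M) + d)"
    "1 + (-(sqrt d)) * (pow_flow (2*M) d z)^M > 0"
proof -
  define w where "w = pow_flow (2*M) d z"
  have "1 + d*z^(2*M) > 0" using z d by (simp add: add_pos_nonneg)
  note P = pow_flow_pos[OF z this, folded w_def]
  show w: "pow_flow (2*M) d z > 0" using P M by (simp add: w_def)
  have "(1/w^M)^2 = 1/w^(2*M)" by (simp add: power_mult[symmetric] power_one_over mult.commute)
  also have "\<dots> = 1/z^(2*M) + d" using P M by simp
  finally have sq: "(1/w^M)^2 = 1/z^(2*M) + d" .
  have wpos: "w > 0" using w unfolding w_def .
  then have inv: "1/w^M = sqrt (1/z^(2*M) + d)"
    using sq by (metis real_sqrt_unique less_eq_real_def zero_less_divide_1_iff zero_less_power)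
  then show "1/(pow_flow (2*M) d z)^M = sqrt (1/z^(2*M) + d)" unfolding w_def .
  have "sqrt d < sqrt (1/z^(2*M) + d)" using z by (intro real_sqrt_less_mono) simp
  then have "sqrt d < 1/w^M" using inv by simp
  then have "sqrt d * w^M < 1" using wpos by (simp add: field_simps)
  then show "1 + (-(sqrt d)) * (pow_flow (2*M) d z)^M > 0" unfolding w_def by simp
qed

lemma lift_map_pos:
  fixes z d :: real
  assumes "z > 0" "d \<ge> 0" "M > 0"
  shows "lift_map M d z > 0" "1/(lift_map M d z)^M = sqrt (1/z^(2*M) + d) - sqrt d"
  using pow_flow_pos[OF lift_map_inner(1,3)[OF assms] assms(3)] lift_map_inner(2)[OF assms]
  unfolding lift_map_def by simp_all

lemma lift_map_nonpos [simp]: "z \<le> 0 \<Longrightarrow> lift_map M d z = z"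
  unfolding lift_map_def by simp

lemma lift_map_strict_mono:
  fixes a b d :: real
  assumes "0 < a" "a < b" "d \<ge> 0" "M > 0"
  shows "lift_map M d a < lift_map M d b"
proof -
  have "1 + d*b^(2*M) > 0" using assms by (simp add: add_pos_nonneg)
  note inner = pow_flow_strict_mono[OF assms(1,2) this]
  show ?thesis unfolding lift_map_def o_def
    using pow_flow_strict_mono(2)[OF inner(1) inner(2) lift_map_inner(3)] assms by simp
qed

lemma approximable_lift_map:
  assumes k: "k \<ge> 1" and d: "d \<ge> 0"
  shows "approximable (lift_map (2^k) d)"
  unfolding approximable_def
proof (intro allI impI conjI)
  fix R :: real assume R: "R > 0"
  define M where "M = (2::nat)^k"
  have M: "M > 0" unfolding M_def by simp
  have "approximable (pow_flow (2^Suc k) d)" using approximable_pow_flow[of "Suc k" d] d by simp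
  then have f: "approximable_on (pow_flow (2*M) d) (-R) R" "continuous_on {-R..R} (pow_flow (2*M) d)"
    using R unfolding approximable_def M_def by auto
  define Y where "Y = pow_flow (2*M) d R"
  have Y: "Y > 0" "1 + (-(sqrt d)) * Y^M > 0" using lift_map_inner[OF R d M] unfolding Y_def by auto
  obtain q where q: "q > Y" "1 + (-(sqrt d))*q^M > 0" using one_plus_mult_pow_pos_beyond[OF Y(2)] by blast
  have g: "approximable_on (pow_flow M (-(sqrt d))) (-R-1) q"
    using approximable_on_pow_flow[of k "-R-1" q "-(sqrt d)"] k R q Y unfolding M_def by simp
  have "\<forall>x\<in>{0..q}. 1 + (-(sqrt d))*x^M > 0" using one_plus_mult_pow_pos[OF q(2)] by auto
  then have g_cont: "continuous_on {-R-1..q} (pow_flow M (-(sqrt d)))" by (rule continuous_on_pow_flow)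
  have img: "pow_flow (2*M) d x \<in> {-R..Y}" if x: "x \<in> {-R..R}" for x
  proof (cases "x \<le> 0")
    case False
    have "1 + d*R^(2*M) > 0" using R d by (simp add: add_pos_nonneg)
    then have "pow_flow (2*M) d x \<le> Y" unfolding Y_def using pow_flow_mono[of x R d "2*M"] False x M by auto
    moreover have "pow_flow (2*M) d x > 0" using lift_map_inner(1)[of x d M] False d M by simp
    ultimately show ?thesis using R by auto
  qed (use x Y in auto)
  define r where "r = min 1 (q - Y)"
  have r: "r > 0" "\<forall>x\<in>{-R..R}. (-R-1) + r \<le> pow_flow (2*M) d x \<and> pow_flow (2*M) d x \<le> q - r"
    using img q unfolding r_def by fastforce+
  show "approximable_on (lift_map (2^k) d) (-R) R"
    using approximable_on_comp[OF f(1) g g_cont r] unfolding lift_map_def M_def .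
  have "pow_flow (2*M) d ` {-R..R} \<subseteq> {-R-1..q}" using img q by force
  then show "continuous_on {-R..R} (lift_map (2^k) d)"
    unfolding lift_map_def M_def[symmetric]
    using continuous_on_compose continuous_on_subset f(2) g_cont by blast
qed

lemma half_line_map_lift_map:
  assumes "k \<ge> 1" "d \<ge> 0"
  shows "half_line_map (lift_map (2^k) d)"
  unfolding half_line_map_def strict_mono_on_def
  using approximable_lift_map[OF assms] lift_map_pos(1) lift_map_strict_mono assms(2) by auto

lemma pow_flow_displacement:
  assumes z: "z > 0" and c: "c \<ge> 0" and M: "M > 0"
  shows "pow_flow M c z \<le> z" "z - pow_flow M c z \<le> z * (c * z^M)"
proof -
  define e where "e = c * z^M"
  have e: "e \<ge> 0" unfolding e_def using c z by simp
  have "1 + c*z^M > 0" using c z by (simp add: add_pos_nonneg)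
  note P = pow_flow_pos[OF z this M]
  have GM: "(pow_flow M c z)^M = z^M/(1+e)" using P(2) unfolding e_def .
  have "(pow_flow M c z)^M \<le> z^M" unfolding GM using e z by (simp add: divide_le_eq field_simps)
  then show le: "pow_flow M c z \<le> z" using P(1) z M power_mono_iff by (metis less_imp_le)
  have "(1+e)^1 \<le> (1+e)^M" using e M by (intro power_increasing) auto
  then have "(z/(1+e))^M \<le> (pow_flow M c z)^M" unfolding GM power_divide using z e
    by (intro divide_left_mono) auto
  moreover have "0 \<le> z/(1+e)" using z e by simp
  ultimately have "z/(1+e) \<le> pow_flow M c z" using P(1) M power_mono_iff[of "z/(1+e)" "pow_flow M c z" M] by simp
  moreover have "z - z/(1+e) \<le> z * e"
    using e z by (simp add: field_simps mult_left_mono)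
  ultimately show "z - pow_flow M c z \<le> z * (c * z^M)" unfolding e_def by linarith
qed

lemma lift_map_displacement:
  assumes z: "z > 0" and d: "d \<ge> 0" and M: "M > 0" and e: "sqrt d * z^M \<le> 1/2"
  shows "z \<le> lift_map M d z" "lift_map M d z \<le> z + 2 * z * (sqrt d * z^M)"
proof -
  define e where "e = sqrt d * z^M"
  have e0: "e \<ge> 0" "e \<le> 1/2" using d z e unfolding e_def by auto
  note L = lift_map_pos[OF z d M]
  have sA: "sqrt (1/z^(2*M)) = 1/z^M"
    using z by (simp add: power_mult mult.commute[of 2] real_sqrt_divide)
  have "sqrt (1/z^(2*M) + d) \<le> 1/z^M + sqrt d"
    using sqrt_add_le_add_sqrt[of "1/z^(2*M)" d] sA z d by simp
  then have "1/(lift_map M d z)^M \<le> 1/z^M" using L(2) by simp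
  then have "z^M \<le> (lift_map M d z)^M" using L(1) z by (simp add: field_simps)
  then show "z \<le> lift_map M d z" using L(1) z M power_mono_iff by (metis less_imp_le)
  have "1/z^M - sqrt d \<le> 1/(lift_map M d z)^M"
    using L(2) sA real_sqrt_le_mono[of "1/z^(2*M)" "1/z^(2*M) + d"] d by simp
  also have "1/z^M - sqrt d = (1 - e)/z^M" unfolding e_def using z by (simp add: field_simps)
  finally have "(lift_map M d z)^M * (1 - e) \<le> z^M" using L(1) z e0 by (simp add: field_simps)
  then have "(lift_map M d z)^M \<le> z^M/(1-e)" using e0 by (simp add: field_simps)
  also have "\<dots> \<le> (z/(1-e))^M"
  proof -
    have "(1-e)^M \<le> (1-e)^1" using e0 M by (intro power_decreasing) auto
    then show ?thesis unfolding power_divide using z e0 by (intro divide_left_mono) auto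
  qed
  finally have "lift_map M d z \<le> z/(1-e)"
    using L(1) z e0 M power_mono_iff[of "lift_map M d z" "z/(1-e)" M] by simp
  also have "\<dots> \<le> z + 2 * z * e"
  proof -
    have "e * (2 * e) * z \<le> e * 1 * z" using e0 z by (intro mult_right_mono mult_left_mono) auto
    then show ?thesis using e0 z by (simp add: field_simps)
  qed
  finally show "lift_map M d z \<le> z + 2 * z * (sqrt d * z^M)" unfolding e_def .
qed

lemma move_down:
  assumes q: "0 < q" "q \<le> t" and tu: "t \<le> u" and k: "k \<ge> 1"
  shows "\<exists>G. half_line_map G \<and> G u = t \<and> (\<forall>z\<in>{0<..q}. G z \<le> z \<and> z - q*(q/t)^(2^k) \<le> G z)"
proof -
  define M where "M = (2::nat)^k"
  have M: "M > 0" unfolding M_def by simp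
  have tp: "t > 0" "u > 0" using q tu by auto
  define c where "c = 1/t^M - 1/u^M"
  have c: "c \<ge> 0" "c \<le> 1/t^M" unfolding c_def using tu tp by (simp_all add: frac_le power_mono)
  have "1 + c*u^M > 0" using c tp by (simp add: add_pos_nonneg)
  note P = pow_flow_pos[OF tp(2) this M]
  have "1/(pow_flow M c u)^M = 1/t^M" using P(3) tp unfolding c_def by simp
  then have Gu: "pow_flow M c u = t" using pow_eq_imp_eq_pos[OF P(1) tp(1) M] by blast
  have moved: "pow_flow M c z \<le> z \<and> z - q*(q/t)^M \<le> pow_flow M c z" if z: "z \<in> {0<..q}" for z
  proof -
    have "z * (c * z^M) \<le> q * (1/t^M * q^M)"
      using z c by (intro mult_mono mult_mono' power_mono) auto
    then show ?thesis using pow_flow_displacement[of z c M] z c M by (simp add: power_divide)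
  qed
  show ?thesis
    using half_line_map_pow_flow[OF k c(1)] Gu moved unfolding M_def by blast
qed

lemma lift_map_hits:
  fixes u t :: real
  assumes up: "0 < u" "u \<le> t" and M: "M > 0"
  obtains r where "0 \<le> r" "r \<le> t^M / (2 * u^(2*M))" "lift_map M (r^2) u = t"
proof -
  define a where "a = 1/u^(2*M)"
  define b where "b = 1/t^M"
  have ab: "a > 0" "b > 0" unfolding a_def b_def using up by auto
  have "u^(2*M) \<le> t^(2*M)" using up by (intro power_mono) auto
  then have "1/t^(2*M) \<le> 1/u^(2*M)" using up by (intro divide_left_mono) auto
  then have b2a: "b^2 \<le> a" unfolding a_def b_def by (simp add: power_mult[symmetric] power_one_over mult.commute)
  define r where "r = (a - b^2)/(2*b)"
  have r: "r \<ge> 0" "r \<le> a/(2*b)" unfolding r_def using b2a ab by (simp_all add: divide_right_mono)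
  have "((a + b^2)/(2*b))^2 = a + r^2" unfolding r_def using ab by (simp add: field_simps power2_eq_square)
  moreover have "(a + b^2)/(2*b) \<ge> 0" using ab by simp
  ultimately have "sqrt (a + r^2) = (a + b^2)/(2*b)" by (rule real_sqrt_unique)
  then have "1/(lift_map M (r^2) u)^M = (a + b^2)/(2*b) - r"
    using lift_map_pos(2)[OF up(1) _ M, of "r^2"] r unfolding a_def by simp
  also have "\<dots> = b" unfolding r_def using ab by (simp add: field_simps power2_eq_square)
  finally have "lift_map M (r^2) u = t"
    using pow_eq_imp_eq_pos[OF lift_map_pos(1)[OF up(1) _ M] _ M] up unfolding b_def by simp
  moreover have "a/(2*b) = t^M/(2*u^(2*M))" unfolding a_def b_def using up by simp
  ultimately show ?thesis using that r by simp
qed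

lemma move_up:
  assumes q: "0 < q" "q \<le> u" and ut: "u \<le> t" and tq: "t*q \<le> u^2" and k: "k \<ge> 1"
  shows "\<exists>G. half_line_map G \<and> G u = t \<and> (\<forall>z\<in>{0<..q}. z \<le> G z \<and> G z \<le> z + q*(t*q/u^2)^(2^k))"
proof -
  define M where "M = (2::nat)^k"
  have M: "M > 0" unfolding M_def by simp
  have up: "u > 0" using q by simp
  obtain r where r: "0 \<le> r" "r \<le> t^M / (2 * u^(2*M))" "lift_map M (r^2) u = t"
    using lift_map_hits[OF up ut M] .
  have "z \<le> lift_map M (r^2) z \<and> lift_map M (r^2) z \<le> z + q*(t*q/u^2)^M" if z: "z \<in> {0<..q}" for z
  proof -
    have "r * z^M \<le> t^M/(2*u^(2*M)) * q^M" using r z by (intro mult_mono power_mono) auto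
    also have "\<dots> = (t*q/u^2)^M / 2" by (simp add: power_divide power_mult_distrib power_mult[symmetric] mult.commute)
    finally have e: "r * z^M \<le> (t*q/u^2)^M / 2" .
    have "(t*q/u^2)^M \<le> 1" using tq up q ut by (simp add: power_le_one)
    then have "sqrt (r^2) * z^M \<le> 1/2" using e r by simp
    note D = lift_map_displacement[OF _ zero_le_power2 M this]
    have "2 * z * (r * z^M) \<le> 2 * q * ((t*q/u^2)^M / 2)" using z e r by (intro mult_mono) auto
    then show ?thesis using D z r by auto
  qed
  then show ?thesis using half_line_map_lift_map[OF k, of "r^2"] r(3) unfolding M_def by auto
qed

lemma move_up_by_factor:
  fixes q r \<rho> t u :: real
  assumes k: "k \<ge> 1" and q: "0 < q" "q < u" and r: "1 < r" and \<rho>: "\<rho> \<le> 1"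
    and u: "u \<le> t" "r * q \<le> \<rho> * u"
  shows "\<exists>G. half_line_map G \<and> G u = min t (u * r) \<and> (\<forall>z\<in>{0<..q}. z \<le> G z \<and> G z \<le> z + q * \<rho>^(2^k))"
proof -
  define c where "c = min t (u * r)"
  have up: "u > 0" using q by simp
  have uc: "u \<le> c" unfolding c_def using u r up by simp
  have "c * q \<le> u * r * q" unfolding c_def using q by (simp add: mult_right_mono)
  also have "\<dots> \<le> u * (\<rho> * u)" using u(2) up by (simp add: mult.assoc mult_left_mono)
  finally have cqu: "c * q \<le> \<rho> * u^2" by (simp add: power2_eq_square mult.commute mult.left_commute)
  then have cq: "c * q/u^2 \<le> \<rho>" using up by (simp add: divide_le_eq mult.commute)
  have "c * q \<le> u^2" using cqu mult_right_mono[OF \<rho>, of "u^2"] by simp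
  then obtain G where G: "half_line_map G" "G u = c"
    "\<forall>z\<in>{0<..q}. z \<le> G z \<and> G z \<le> z + q*(c*q/u^2)^(2^k)"
    using move_up[OF q(1) less_imp_le[OF q(2)] uc _ k] by blast
  have "q*(c*q/u^2)^(2^k) \<le> q * \<rho>^(2^k)" using cq q up uc by (intro mult_left_mono power_mono) auto
  then have "z \<le> G z \<and> G z \<le> z + q * \<rho>^(2^k)" if "z \<in> {0<..q}" for z
    using G(3) that by (meson add_left_mono order_trans)
  then show ?thesis using G(1,2) unfolding c_def by blast
qed

text \<open>Climbing from \<open>u\<close> to \<open>t\<close> by factors at most \<open>r\<close> keeps \<open>r q/u \<le> \<rho>\<close>, so each step moves the points
  of \<open>(0, q]\<close> up by at most \<open>q \<rho>\<^sup>2\<^sup>^\<^sup>k\<close>.\<close>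
lemma move_up_chain:
  fixes q r \<rho> t u Q :: real
  assumes k: "k \<ge> 1" and q: "0 < q" and r: "1 < r" and \<rho>: "0 \<le> \<rho>" "\<rho> \<le> 1"
    and u: "q < u" "u \<le> t" "t \<le> u * r^K" "r * q \<le> \<rho> * u"
    and Q: "0 < Q" "Q + K * (q * \<rho>^(2^k)) \<le> q"
  shows "\<exists>G. half_line_map G \<and> G u = t \<and> (\<forall>z\<in>{0<..Q}. z \<le> G z \<and> G z \<le> z + K * (q * \<rho>^(2^k)))"
  using u Q
proof (induction K arbitrary: u Q)
  case 0
  then show ?case using half_line_map_id[unfolded id_def] by (intro exI[of _ "\<lambda>x. x"]) auto
next
  case (Suc K)
  define \<epsilon> where "\<epsilon> = q * \<rho>^(2^k)"
  have \<epsilon>: "\<epsilon> \<ge> 0" unfolding \<epsilon>_def using q \<rho> by simp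
  define c where "c = min t (u * r)"
  obtain G1 where G1: "half_line_map G1" "G1 u = c" "\<forall>z\<in>{0<..q}. z \<le> G1 z \<and> G1 z \<le> z + \<epsilon>"
    using move_up_by_factor[OF k q Suc.prems(1) r \<rho>(2) Suc.prems(2,4)] unfolding c_def \<epsilon>_def by blast
  have "0 \<le> Suc K * \<epsilon>" using \<epsilon> by simp
  then have Qq: "{0<..Q} \<subseteq> {0<..q}" using Suc.prems(6) unfolding \<epsilon>_def by auto
  have uc: "u \<le> c" "c \<le> t" unfolding c_def using Suc.prems r q by auto
  have "t \<le> c * r^K"
  proof (cases "t \<le> u * r")
    case True
    then show ?thesis using one_le_power[of r K] r Suc.prems q unfolding c_def by simp
  qed (use Suc.prems(3) in \<open>simp add: c_def mult.assoc\<close>)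
  moreover have "q < c" "r * q \<le> \<rho> * c" using Suc.prems(1,4) uc mult_left_mono[OF uc(1) \<rho>(1)] by linarith+
  moreover have "0 < Q + \<epsilon>" using Suc.prems(5) \<epsilon> by linarith
  moreover have "Q + \<epsilon> + K * \<epsilon> \<le> q" using Suc.prems(6) by (simp add: \<epsilon>_def algebra_simps)
  ultimately obtain G2 where G2: "half_line_map G2" "G2 c = t"
    "\<forall>z\<in>{0<..Q+\<epsilon>}. z \<le> G2 z \<and> G2 z \<le> z + K * \<epsilon>"
    using Suc.IH[OF _ uc(2), folded \<epsilon>_def] by blast
  have "z \<le> (G2 \<circ> G1) z \<and> (G2 \<circ> G1) z \<le> z + Suc K * \<epsilon>" if z: "z \<in> {0<..Q}" for z
  proof -
    have "z \<le> G1 z" "G1 z \<le> z + \<epsilon>" using G1(3) subsetD[OF Qq z] by auto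
    moreover from this have "G1 z \<in> {0<..Q+\<epsilon>}" using z by auto
    moreover from this have "G1 z \<le> G2 (G1 z)" "G2 (G1 z) \<le> G1 z + K * \<epsilon>" using G2(3) by auto
    ultimately show ?thesis by (simp add: algebra_simps)
  qed
  moreover have "(G2 \<circ> G1) u = t" using G1(2) G2(2) by simp
  ultimately show ?case using half_line_map_comp[OF G1(1) G2(1)] unfolding \<epsilon>_def by blast
qed

lemma exists_pow2_small:
  fixes \<rho> C \<eta> :: real
  assumes "0 \<le> \<rho>" "\<rho> < 1" "0 \<le> C" "\<eta> > 0"
  shows "\<exists>k\<ge>1. C * \<rho>^(2^k) \<le> \<eta>"
proof -
  obtain n where n: "\<rho>^n < \<eta>/(C+1)" using real_arch_pow_inv[of "\<eta>/(C+1)" \<rho>] assms by auto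
  have "n < 2^n" "(2::nat)^n \<le> 2^(Suc n)" by (rule less_exp) simp
  then have "n \<le> 2^(Suc n)" by linarith
  then have "\<rho>^(2^(Suc n)) \<le> \<rho>^n" using assms by (intro power_decreasing) auto
  then have "C * \<rho>^(2^(Suc n)) \<le> C * (\<eta>/(C+1))" using n assms by (intro mult_left_mono) auto
  also have "\<dots> \<le> \<eta>" using assms by (simp add: field_simps)
  finally show ?thesis by (intro exI[of _ "Suc n"]) auto
qed

lemma move_point:
  fixes q0 u t \<eta> :: real
  assumes q0: "0 < q0" "q0 < u" "q0 < t" and \<eta>: "\<eta> > 0"
  shows "\<exists>G. half_line_map G \<and> G u = t \<and> (\<forall>z\<in>{0<..q0}. \<bar>G z - z\<bar> \<le> \<eta>)"
proof (cases "t \<le> u")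
  case True
  have "0 \<le> q0/t" "q0/t < 1" using q0 by auto
  then obtain k where k: "k \<ge> 1" "q0 * (q0/t)^(2^k) \<le> \<eta>" using exists_pow2_small[of "q0/t" q0 \<eta>] q0 \<eta> by auto
  then obtain G where G: "half_line_map G" "G u = t" "\<forall>z\<in>{0<..q0}. G z \<le> z \<and> z - q0*(q0/t)^(2^k) \<le> G z"
    using move_down[OF q0(1) less_imp_le[OF q0(3)] True] by blast
  then have "\<forall>z\<in>{0<..q0}. \<bar>G z - z\<bar> \<le> \<eta>" using k(2) by (force simp: abs_le_iff)
  then show ?thesis using G by blast
next
  case False
  define q where "q = (q0 + u)/2"
  have q: "q0 < q" "q < u" "0 < q" unfolding q_def using q0 by auto
  define r where "r = sqrt (u/q)"
  have "u/q > 1" using q by simp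
  then have r: "r > 1" "r * r = u/q" unfolding r_def using q by (auto simp: real_sqrt_gt_1_iff)
  then have "r < u/q" using mult_strict_left_mono[of 1 r r] by simp
  define \<rho> where "\<rho> = r * q/u"
  have \<rho>: "0 \<le> \<rho>" "\<rho> < 1" "r * q \<le> \<rho> * u" unfolding \<rho>_def using r \<open>r < u/q\<close> q by (auto simp: field_simps)
  obtain K where "t/u < r^K" using real_arch_pow[OF r(1)] by blast
  then have tK: "t \<le> u * r^K" using q by (simp add: field_simps)
  obtain k where k: "k \<ge> 1" "K * q * \<rho>^(2^k) \<le> min \<eta> (q - q0)"
    using exists_pow2_small[OF \<rho>(1,2), of "K * q" "min \<eta> (q - q0)"] q \<eta> by auto
  then have K: "K * (q * \<rho>^(2^k)) \<le> \<eta>" "q0 + K * (q * \<rho>^(2^k)) \<le> q" by (auto simp: mult.assoc)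
  obtain G where G: "half_line_map G" "G u = t"
    "\<forall>z\<in>{0<..q0}. z \<le> G z \<and> G z \<le> z + K * (q * \<rho>^(2^k))"
    using move_up_chain[OF k(1) q(3) r(1) \<rho>(1) less_imp_le[OF \<rho>(2)] q(2) _ tK \<rho>(3) q0(1) K(2)] False
    by auto
  then have "\<forall>z\<in>{0<..q0}. \<bar>G z - z\<bar> \<le> \<eta>" using K(1) by (force simp: abs_le_iff)
  then show ?thesis using G by blast
qed

lemma fit_one_more_point:
  fixes xs ys :: "nat \<Rightarrow> real"
  assumes F: "half_line_map F" "\<forall>i<n. \<bar>F (xs i) - ys i\<bar> \<le> \<eta>/2"
    and xs: "\<forall>i<Suc n. 0 < xs i" "strict_mono_on {..<Suc n} xs"
    and y: "0 < ys n" "n > 0 \<Longrightarrow> F (xs (n-1)) < ys n" and \<eta>: "\<eta> > 0"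
  shows "\<exists>H. half_line_map H \<and> (\<forall>i<Suc n. \<bar>H (xs i) - ys i\<bar> \<le> \<eta>)"
proof -
  define u where "u = F (xs n)"
  have u: "u > 0" unfolding u_def using half_line_mapD(3)[OF F(1)] xs(1) by simp
  obtain q0 where q0: "0 < q0" "q0 < u" "q0 < ys n" "\<forall>i<n. F (xs i) \<le> q0"
  proof (cases n)
    case 0
    then show ?thesis using that[of "min u (ys n)/2"] u y(1) by simp
  next
    case (Suc m)
    have "F (xs i) \<le> F (xs m)" if "i < n" for i
      using half_line_mapD(5)[OF F(1)] strict_mono_on_leD[OF xs(2)] xs(1) that Suc
      by (simp add: less_Suc_eq_le)
    moreover have "F (xs m) < u" unfolding u_def
      using half_line_mapD(4)[OF F(1)] xs Suc by (simp add: strict_mono_on_def)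
    ultimately show ?thesis
      using that[of "F (xs m)"] half_line_mapD(3)[OF F(1)] xs(1) y(2) Suc by simp
  qed
  obtain G where G: "half_line_map G" "G u = ys n" "\<forall>z\<in>{0<..q0}. \<bar>G z - z\<bar> \<le> \<eta>/2"
    using move_point[OF q0(1-3), of "\<eta>/2"] \<eta> by auto
  have "\<bar>G (F (xs i)) - ys i\<bar> \<le> \<eta>" if i: "i < Suc n" for i
  proof (cases "i = n")
    case False
    then have "i < n" using i by simp
    then have "F (xs i) \<in> {0<..q0}" using q0(4) half_line_mapD(3)[OF F(1)] xs(1) by simp
    then have "\<bar>G (F (xs i)) - F (xs i)\<bar> \<le> \<eta>/2" using G(3) by blast
    moreover have "\<bar>F (xs i) - ys i\<bar> \<le> \<eta>/2" using F(2) \<open>i < n\<close> by blast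
    ultimately show ?thesis by linarith
  qed (use G(2) u_def \<eta> in simp)
  then show ?thesis using half_line_map_comp[OF F(1) G(1)] by auto
qed

text \<open>The first \<open>n\<close> points are fitted with an error below half the gap to \<open>y\<^sub>n\<close>, which keeps them
  below \<open>y\<^sub>n\<close>, so that the new point can be moved independently.\<close>
lemma interpolate_increasing:
  fixes xs ys :: "nat \<Rightarrow> real"
  assumes "\<forall>i<n. 0 < xs i" "strict_mono_on {..<n} xs" "\<forall>i<n. 0 < ys i" "strict_mono_on {..<n} ys"
    and "\<eta> > 0"
  shows "\<exists>F. half_line_map F \<and> (\<forall>i<n. \<bar>F (xs i) - ys i\<bar> \<le> \<eta>)"
  using assms
proof (induction n arbitrary: \<eta>)
  case 0
  then show ?case using half_line_map_id by blast
next
  case (Suc n)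
  have mono: "strict_mono_on {..<n} xs" "strict_mono_on {..<n} ys"
    using Suc.prems(2,4) by (auto intro: monotone_on_subset)
  define \<eta>' where "\<eta>' = (if n = 0 then \<eta>/2 else min (\<eta>/2) ((ys n - ys (n-1))/2))"
  have gap: "ys (n-1) < ys n" if "n > 0" using Suc.prems(4) that by (auto simp: strict_mono_on_def)
  then have \<eta>': "\<eta>' > 0" "\<eta>' \<le> \<eta>/2" unfolding \<eta>'_def using Suc.prems(5) by auto
  obtain F where F: "half_line_map F" "\<forall>i<n. \<bar>F (xs i) - ys i\<bar> \<le> \<eta>'"
    using Suc.IH[OF _ mono(1) _ mono(2) \<eta>'(1)] Suc.prems(1,3) by auto
  have "F (xs (n-1)) < ys n" if "n > 0"
  proof -
    have "\<eta>' = min (\<eta>/2) ((ys n - ys (n-1))/2)" using that unfolding \<eta>'_def by simp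
    then have "\<eta>' \<le> (ys n - ys (n-1))/2" by (metis min.cobounded2)
    moreover have "F (xs (n-1)) - ys (n-1) \<le> \<eta>'"
      using abs_le_D1 F(2) diff_less[OF zero_less_one that] by blast
    ultimately show ?thesis using gap[OF that] by argo
  qed
  moreover have "\<forall>i<n. \<bar>F (xs i) - ys i\<bar> \<le> \<eta>/2" using F(2) \<eta>'(2) by fastforce
  ultimately show ?case using fit_one_more_point[OF F(1) _ Suc.prems(1,2)] Suc.prems(3,5) by simp
qed

section \<open>Approximating increasing maps\<close>

text \<open>Two maps adjusting the positive half-line, the second conjugated by \<open>x \<mapsto> -x\<close>, fit \<open>h\<close> on both sides.\<close>
lemma approximable_fit_symmetric:
  fixes xs :: "nat \<Rightarrow> real" and h :: "real \<Rightarrow> real"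
  assumes xs: "\<forall>i<n. 0 < xs i" "strict_mono_on {..<n} xs" and h: "strict_mono h" "h 0 = 0"
    and \<eta>: "\<eta> > 0"
  shows "\<exists>F. approximable F \<and> F 0 = 0 \<and> (\<forall>i<n. \<bar>F (xs i) - h (xs i)\<bar> \<le> \<eta> \<and> \<bar>F (- xs i) - h (- xs i)\<bar> \<le> \<eta>)"
proof -
  have "strict_mono_on {..<n} (\<lambda>i. h (xs i))" "strict_mono_on {..<n} (\<lambda>i. - h (- xs i))"
    using xs(2) h(1) by (auto simp: strict_mono_on_def strict_mono_def)
  moreover have "\<forall>i<n. 0 < h (xs i)" "\<forall>i<n. 0 < - h (- xs i)"
    using xs(1) h by (metis neg_less_0_iff_less neg_0_less_iff_less strict_monoD)+
  ultimately obtain Fp Fm where Fp: "half_line_map Fp" "\<forall>i<n. \<bar>Fp (xs i) - h (xs i)\<bar> \<le> \<eta>"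
    and Fm: "half_line_map Fm" "\<forall>i<n. \<bar>Fm (xs i) - - h (- xs i)\<bar> \<le> \<eta>"
    using interpolate_increasing[OF xs(1,2) _ _ \<eta>] by metis
  define F where "F = (\<lambda>x. - Fm (-x)) \<circ> Fp"
  have "approximable F"
    unfolding F_def using Fp(1) Fm(1) by (intro approximable_comp approximable_reflect) (auto simp: half_line_map_def)
  moreover have "F (- xs i) = - Fm (xs i)" if "i < n" for i
    using half_line_mapD(2)[OF Fp(1)] xs(1) that unfolding F_def by auto
  moreover have "F (xs i) = Fp (xs i)" if "i < n" for i
  proof -
    have "Fp (xs i) > 0" using half_line_mapD(3)[OF Fp(1)] xs(1) that by simp
    then show ?thesis using half_line_mapD(2)[OF Fm(1), of "- Fp (xs i)"] unfolding F_def by simp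
  qed
  moreover have "F 0 = 0" using half_line_mapD(2)[OF Fp(1)] half_line_mapD(2)[OF Fm(1)] unfolding F_def by simp
  ultimately show ?thesis using Fp(2) Fm(2) by (intro exI[of _ F]) (auto simp: abs_minus_commute)
qed

lemma grid_point_in_interval:
  fixes R :: real and n :: nat and j :: int
  assumes "R > 0" "n > 0" "-int n \<le> j" "j \<le> int n"
  shows "j * R / n \<in> {-R..R}"
proof -
  have "\<bar>real_of_int j\<bar> * R / n \<le> n * R / n" using assms by (intro divide_right_mono mult_right_mono) auto
  moreover have "\<bar>j * R / n\<bar> = \<bar>real_of_int j\<bar> * R / n" using assms by (simp add: abs_mult)
  ultimately have "\<bar>j * R / n\<bar> \<le> R" using assms by simp
  then show ?thesis unfolding atLeastAtMost_iff abs_le_iff by simp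
qed

lemma approximable_fit_grid:
  fixes h :: "real \<Rightarrow> real" and R \<eta> :: real and n :: nat
  assumes R: "R > 0" and n: "n > 0" and h: "strict_mono h" "h 0 = 0" and \<eta>: "\<eta> > 0"
  shows "\<exists>F. approximable F \<and> (\<forall>j::int. -int n \<le> j \<longrightarrow> j \<le> int n \<longrightarrow> \<bar>F (j*R/n) - h (j*R/n)\<bar> \<le> \<eta>)"
proof -
  define xs where "xs i = real (Suc i) * R / n" for i
  have "\<forall>i<n. 0 < xs i" "strict_mono_on {..<n} xs"
    unfolding xs_def using R n by (auto simp: strict_mono_on_def divide_strict_right_mono)
  then obtain F where F: "approximable F" "F 0 = 0"
    "\<forall>i<n. \<bar>F (xs i) - h (xs i)\<bar> \<le> \<eta> \<and> \<bar>F (- xs i) - h (- xs i)\<bar> \<le> \<eta>"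
    using approximable_fit_symmetric[OF _ _ h \<eta>] by blast
  have "\<bar>F (j*R/n) - h (j*R/n)\<bar> \<le> \<eta>" if j: "-int n \<le> j" "j \<le> int n" for j :: int
  proof -
    consider "j > 0" | "j = 0" | "j < 0" by linarith
    then show ?thesis
    proof cases
      case 1
      then have "nat j - 1 < n" "j*R/n = xs (nat j - 1)" unfolding xs_def using j by auto
      then show ?thesis using F(3) by metis
    next
      case 3
      then have "nat (-j) - 1 < n" "j*R/n = - xs (nat (-j) - 1)" unfolding xs_def using j by auto
      then show ?thesis using F(3) by metis
    qed (use F(2) h(2) \<eta> in simp)
  qed
  then show ?thesis using F(1) by blast
qed

lemma grid_bracket:
  fixes R x :: real and n :: nat
  assumes R: "R > 0" and n: "n > 0" and x: "x \<in> {-R..R}"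
  obtains j1 j2 :: int where "-int n \<le> j1" "j1 \<le> int n" "-int n \<le> j2" "j2 \<le> int n"
    "j1*R/n \<le> x" "x \<le> j2*R/n" "j2*R/n - j1*R/n \<le> R/n"
proof -
  define j where "j = \<lfloor>x * n / R\<rfloor>"
  have "-R * n / R \<le> x * n / R" "x * n / R \<le> R * n / R"
    using x R n by (intro divide_right_mono mult_right_mono; simp)+
  then have j: "-int n \<le> j" "j \<le> int n" unfolding j_def using R by (simp_all add: le_floor_iff floor_le_iff)
  have "real_of_int j \<le> x * n / R" "x * n / R < real_of_int j + 1" unfolding j_def by linarith+
  then have jx: "j*R/n \<le> x" "x < (j+1)*R/n" using R n by (simp_all add: field_simps)
  show ?thesis
  proof (cases "j < int n")
    case True
    then show ?thesis using that[of j "j+1"] j jx R n by (simp add: field_simps)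
  next
    case False
    then have "j = int n" using j by simp
    then show ?thesis using that[of j j] j jx x R n by auto
  qed
qed

lemma mono_close_of_grid_close:
  fixes \<phi> h :: "real \<Rightarrow> real" and R e \<eta> :: real and n :: nat
  assumes R: "R > 0" and n: "n > 0"
    and mono: "mono_on {-R..R} \<phi>" "mono_on {-R..R} h"
    and grid: "\<And>j::int. -int n \<le> j \<Longrightarrow> j \<le> int n \<Longrightarrow> \<bar>\<phi> (j*R/n) - h (j*R/n)\<bar> \<le> e"
    and osc: "\<And>a b. a \<in> {-R..R} \<Longrightarrow> b \<in> {-R..R} \<Longrightarrow> a \<le> b \<Longrightarrow> b - a \<le> R/n \<Longrightarrow> h b - h a \<le> \<eta>"
    and x: "x \<in> {-R..R}"
  shows "\<bar>\<phi> x - h x\<bar> \<le> e + \<eta>"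
proof -
  obtain j1 j2 :: int where j: "-int n \<le> j1" "j1 \<le> int n" "-int n \<le> j2" "j2 \<le> int n"
    and jx: "j1*R/n \<le> x" "x \<le> j2*R/n" "j2*R/n - j1*R/n \<le> R/n"
    using grid_bracket[OF R n x] .
  define a b where "a = j1*R/n" and "b = j2*R/n"
  have ab: "a \<in> {-R..R}" "b \<in> {-R..R}" unfolding a_def b_def using grid_point_in_interval R n j by auto
  have "\<phi> a \<le> \<phi> x" "\<phi> x \<le> \<phi> b" "h a \<le> h x" "h x \<le> h b"
    using mono_onD[OF mono(1)] mono_onD[OF mono(2)] ab x jx unfolding a_def b_def by auto
  moreover have "\<bar>\<phi> a - h a\<bar> \<le> e" "\<bar>\<phi> b - h b\<bar> \<le> e" unfolding a_def b_def using grid j by auto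
  moreover have "h b - h a \<le> \<eta>" using osc ab jx unfolding a_def b_def by auto
  ultimately show ?thesis by linarith
qed

lemma approximable_on_increasing:
  fixes h :: "real \<Rightarrow> real" and R :: real
  assumes h: "continuous_on UNIV h" "strict_mono h" "h 0 = 0" and R: "R > 0"
  shows "approximable_on h (-R) R"
  unfolding approximable_on_def
proof (intro allI impI)
  fix \<eta> :: real assume "\<eta> > 0"
  define e where "e = \<eta>/3"
  have e: "e > 0" using \<open>\<eta> > 0\<close> unfolding e_def by simp
  obtain \<delta> where \<delta>: "\<delta> > 0" "\<And>a b. a \<in> {-R..R} \<Longrightarrow> b \<in> {-R..R} \<Longrightarrow> dist b a < \<delta> \<Longrightarrow> dist (h b) (h a) < e"
    using uniformly_continuous_onE[OF compact_uniformly_continuous[OF continuous_on_subset[OF h(1)] compact_Icc] e]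
    by blast
  obtain n :: nat where n\<delta>: "R/\<delta> < n" using reals_Archimedean2 by blast
  moreover have "0 < R/\<delta>" using R \<delta> by simp
  ultimately have "n > 0" by simp
  then have n: "n > 0" "R/n < \<delta>" using n\<delta> \<delta> by (simp_all add: field_simps)
  obtain F where F: "approximable F" "\<forall>j::int. -int n \<le> j \<longrightarrow> j \<le> int n \<longrightarrow> \<bar>F (j*R/n) - h (j*R/n)\<bar> \<le> e"
    using approximable_fit_grid[OF R n(1) h(2,3) e] by blast
  obtain w where w: "admissible_on w {-R..R}" "\<forall>x\<in>{-R..R}. \<bar>run w x - F x\<bar> \<le> e"
    using F(1) R e unfolding approximable_def approximable_on_def by blast
  have "\<bar>run w x - h x\<bar> \<le> 2*e + e" if "x \<in> {-R..R}" for x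
  proof (rule mono_close_of_grid_close[OF R n(1) _ _ _ _ that])
    show "mono_on {-R..R} (run w)" using w(1) run_mono unfolding admissible_on_def by (auto intro: mono_onI)
    show "mono_on {-R..R} h" using h(2) by (auto intro: mono_onI simp: strict_mono_less_eq)
    show "\<bar>run w (j*R/n) - h (j*R/n)\<bar> \<le> 2*e" if "-int n \<le> j" "j \<le> int n" for j :: int
      using w(2) F(2) grid_point_in_interval[OF R n(1) that] that by fastforce
    show "h b - h a \<le> e" if "a \<in> {-R..R}" "b \<in> {-R..R}" "a \<le> b" "b - a \<le> R/n" for a b
      using \<delta>(2)[OF that(1,2)] that n(2) by (simp add: dist_real_def)
  qed
  then show "\<exists>w. admissible_on w {-R..R} \<and> (\<forall>x\<in>{-R..R}. \<bar>run w x - h x\<bar> \<le> \<eta>)"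
    using w(1) unfolding e_def by auto
qed

theorem lemma3p15:
  fixes K :: "real set" and h :: "real \<Rightarrow> real" and \<epsilon> :: real
  assumes "compact K" and "continuous_on UNIV h" and "strict_mono h" and "h 0 = 0"
    and "\<epsilon> > 0"
  shows "\<exists>\<phi>\<in>A_F K. \<exists>\<delta><\<epsilon>. \<forall>x\<in>K. \<bar>\<phi> x - h x\<bar> \<le> \<delta>"
proof -
  obtain B where "\<forall>x\<in>K. \<bar>x\<bar> \<le> B" using compact_imp_bounded[OF assms(1)] unfolding bounded_iff by auto
  then obtain R where R: "R > 0" "K \<subseteq> {-R..R}"
    by (intro that[of "\<bar>B\<bar> + 1"]) (auto simp: abs_le_iff)
  obtain w where w: "admissible_on w {-R..R}" "\<forall>x\<in>{-R..R}. \<bar>run w x - h x\<bar> \<le> \<epsilon>/2"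
    using approximable_on_increasing[OF assms(2-4) R(1)] assms(5) unfolding approximable_on_def
    by (meson half_gt_zero)
  moreover obtain \<phi> where "AF K \<phi> (run w ` K)" "\<forall>x\<in>K. \<phi> x = run w x"
    using admissible_word_realized[OF assms(1)] w(1) R(2) unfolding admissible_on_def by blast
  ultimately show ?thesis using R(2) assms(5) unfolding A_F_def
    by (intro bexI[of _ \<phi>] exI[of _ "\<epsilon>/2"]) auto
qed

end
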